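(* Fix $\delta\in(0,1)$, $\sigma>0$, $s\in[p]$ and $u>0$. There exists $\lambda_0>0$ depending only on $\delta$ and $u$ such that for every $\lambda\geq\lambda_0$ the following holds. Let $P_0\in\mathcal{P}_0(p,n,u,\sigma)$ and $P\in\mathcal{P}(p,n,s,u,\sigma,\rho)$, where $\rho\geq C\{s\log(ep/s)\vee\log\log(8n)\}$ for some $C\geq 8\lambda^2$, and suppose that the changepoint location $t_0$ and the pre- and post-change covariance matrices $\Sigma_1,\Sigma_2$ of the $X_i$ under $P$ additionally satisfy $$\min(t_0,n-t_0)\frac{\|\Sigma_1-\Sigma_2\|_{\mathrm{op}}^2}{\sigma^4}\geq C\{s\log(ep/s)\vee\log\log(8n)\}.$$ Then $\mathbb{E}_{P_0}\psi_\lambda(X)+\mathbb{E}_P(1-\psi_\lambda(X))\leq\delta$.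
   Context: Let $n\geq2$, $p\geq1$. For a real random variable $Y$, $\|Y\|_{\Psi_2}=\inf\{t>0:\ \mathbb{E}\exp(Y^2/t^2)\leq2\}$; for $\mathbb{R}^p$-valued $Y$, $\|Y\|_{\Psi_2}=\sup_{v\in S^{p-1}}\|v^\top Y\|_{\Psi_2}$. $S^{p-1}_s=\{v\in S^{p-1}:\|v\|_0\leq s\}$; for symmetric $A$, $\lambda^s_{\max}(A)=\sup_{v\in S^{p-1}_s}|v^\top Av|$. $M(p,s)$ is the set of symmetric $A$ with $\lambda^s_{\max}(A)=\|A\|_{\mathrm{op}}$; $\mathrm{PD}(p)$ the symmetric positive definite $p\times p$ matrices. $\mathcal{P}(u)$: distributions of $X=(X_1^\top,\ldots,X_n^\top)^\top$ with independent mean-zero $X_i$ and $\|X_i\|_{\Psi_2}^2\leq u\|\mathbb{E}X_iX_i^\top\|_{\mathrm{op}}$. $\mathcal{P}_0(p,n,u,\sigma)$: those $P\in\mathcal{P}(u)$ with $\mathbb{E}X_iX_i^\top=\Sigma$ for all $i$, some $\Sigma\in\mathrm{PD}(p)$ with $\|\Sigma\|_{\mathrm{op}}=\sigma^2$. $\mathcal{P}(p,n,s,u,\sigma,\rho)$: those $P\in\mathcal{P}(u)$ for which there are $t_0\in[n-1]$ and $\Sigma_1,\Sigma_2\in\mathrm{PD}(p)$ with $\mathbb{E}X_iX_i^\top=\Sigma_1$ for $i\leq t_0$, $=\Sigma_2$ for $i>t_0$, $\|\Sigma_1\|_{\mathrm{op}}\vee\|\Sigma_2\|_{\mathrm{op}}\leq\sigma^2$,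 $\Sigma_1-\Sigma_2\in M(p,s)$ and $\min(t_0,n-t_0)[(\frac{D}{\sigma^2-D})\wedge(\frac{D}{\sigma^2-D})^2]=\rho$ with $D=\|\Sigma_1-\Sigma_2\|_{\mathrm{op}}$. Test: $\mathcal{T}=\{2^0,\ldots,2^{\lfloor\log_2(n/2)\rfloor}\}$; $\widehat\Sigma_{1,t}=t^{-1}\sum_{i=1}^tX_iX_i^\top$, $\widehat\Sigma_{2,t}=t^{-1}\sum_{i=1}^tX_{n-i+1}X_{n-i+1}^\top$; $S_{t,s}=\lambda^s_{\max}(\widehat\Sigma_{1,t}-\widehat\Sigma_{2,t})$; with $\gamma=s\log(ep/s)\vee\log\log(8n)$, $r(p,n,s,t)=\sqrt{\gamma/t}\vee\gamma/t$; and $\psi_\lambda(X)=\max_{t\in\mathcal{T}}\mathbb{1}\{S_{t,s}>\lambda\sigma^2r(p,n,s,t)\}$. *)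

theory Defs
  imports "HOL-Analysis.Analysis" "HOL-Probability.Probability"
begin

text \<open>Vectors in R^p are functions nat => real whose coordinates j < p are
the meaningful ones; p x p matrices are functions nat => nat => real whose entries
j, k < p are the meaningful ones. A data set X = (X_1,...,X_n) is a function
x :: nat => nat => real, where x i j is coordinate j (j < p) of X_i (1 <= i <= n).
A distribution of X is a probability measure on (nat => nat => real) with its Borel
sigma-algebra (product topology), concentrated on the coordinates i in {1..n}, j < p.\<close>

type_synonym data = "nat \<Rightarrow> nat \<Rightarrow> real"

definition vnorm :: "nat \<Rightarrow> (nat \<Rightarrow> real) \<Rightarrow> real" where
  "vnorm p v = sqrt (\<Sum>j<p. (v j)\<^sup>2)"

definition sphere_p :: "nat \<Rightarrow> (nat \<Rightarrow> real) set" where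
  "sphere_p p = {v. vnorm p v = 1 \<and> (\<forall>j\<ge>p. v j = 0)}"

definition sparse_sphere :: "nat \<Rightarrow> nat \<Rightarrow> (nat \<Rightarrow> real) set" where
  "sparse_sphere p s = {v \<in> sphere_p p. card {j. j < p \<and> v j \<noteq> 0} \<le> s}"

definition matvec :: "nat \<Rightarrow> (nat \<Rightarrow> nat \<Rightarrow> real) \<Rightarrow> (nat \<Rightarrow> real) \<Rightarrow> (nat \<Rightarrow> real)" where
  "matvec p A v = (\<lambda>i. if i < p then (\<Sum>j<p. A i j * v j) else 0)"

definition quadf :: "nat \<Rightarrow> (nat \<Rightarrow> nat \<Rightarrow> real) \<Rightarrow> (nat \<Rightarrow> real) \<Rightarrow> real" where
  "quadf p A v = (\<Sum>i<p. \<Sum>j<p. v i * A i j * v j)"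

definition op_norm :: "nat \<Rightarrow> (nat \<Rightarrow> nat \<Rightarrow> real) \<Rightarrow> real" where
  "op_norm p A = Sup ((\<lambda>v. vnorm p (matvec p A v)) ` sphere_p p)"

definition lam_smax :: "nat \<Rightarrow> nat \<Rightarrow> (nat \<Rightarrow> nat \<Rightarrow> real) \<Rightarrow> real" where
  "lam_smax p s A = Sup ((\<lambda>v. \<bar>quadf p A v\<bar>) ` sparse_sphere p s)"

definition symm :: "nat \<Rightarrow> (nat \<Rightarrow> nat \<Rightarrow> real) \<Rightarrow> bool" where
  "symm p A \<longleftrightarrow> (\<forall>i<p. \<forall>j<p. A i j = A j i)"

definition Mset :: "nat \<Rightarrow> nat \<Rightarrow> (nat \<Rightarrow> nat \<Rightarrow> real) set" where
  "Mset p s = {A. symm p A \<and> lam_smax p s A = op_norm p A}"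

definition PD :: "nat \<Rightarrow> (nat \<Rightarrow> nat \<Rightarrow> real) set" where
  "PD p = {A. symm p A \<and> (\<forall>v. (\<forall>j\<ge>p. v j = 0) \<and> (\<exists>j<p. v j \<noteq> 0) \<longrightarrow> quadf p A v > 0)}"

text \<open>Psi_2 (sub-Gaussian Orlicz) norm of a real random variable; value in ennreal,
  with Inf {} = infinity.\<close>
definition psi2 :: "'a measure \<Rightarrow> ('a \<Rightarrow> real) \<Rightarrow> ennreal" where
  "psi2 M Y = Inf {ennreal t | t. t > 0 \<and>
      (\<integral>\<^sup>+ w. ennreal (exp ((Y w)\<^sup>2 / t\<^sup>2)) \<partial>M) \<le> 2}"

definition psi2_vec :: "nat \<Rightarrow> 'a measure \<Rightarrow> ('a \<Rightarrow> nat \<Rightarrow> real) \<Rightarrow> ennreal" where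
  "psi2_vec p M Y = Sup ((\<lambda>v. psi2 M (\<lambda>w. \<Sum>j<p. v j * Y w j)) ` sphere_p p)"

definition cov :: "data measure \<Rightarrow> nat \<Rightarrow> nat \<Rightarrow> nat \<Rightarrow> real" where
  "cov P i = (\<lambda>j k. \<integral>x. x i j * x i k \<partial>P)"

definition mat_eq :: "nat \<Rightarrow> (nat \<Rightarrow> nat \<Rightarrow> real) \<Rightarrow> (nat \<Rightarrow> nat \<Rightarrow> real) \<Rightarrow> bool" where
  "mat_eq p A B \<longleftrightarrow> (\<forall>j<p. \<forall>k<p. A j k = B j k)"

definition is_data_dist :: "nat \<Rightarrow> nat \<Rightarrow> data measure \<Rightarrow> bool" where
  "is_data_dist p n P \<longleftrightarrow> prob_space P \<and> sets P = sets borel \<and>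
     (AE x in P. \<forall>i j. (i \<notin> {1..n} \<or> p \<le> j) \<longrightarrow> x i j = 0)"

definition class_Pu :: "nat \<Rightarrow> nat \<Rightarrow> real \<Rightarrow> data measure \<Rightarrow> bool" where
  "class_Pu p n u P \<longleftrightarrow> is_data_dist p n P \<and>
     prob_space.indep_vars P (\<lambda>_. borel) (\<lambda>i x. x i) {1..n} \<and>
     (\<forall>i\<in>{1..n}. \<forall>j<p. integrable P (\<lambda>x. x i j) \<and> (\<integral>x. x i j \<partial>P) = 0) \<and>
     (\<forall>i\<in>{1..n}. (psi2_vec p P (\<lambda>x. x i))\<^sup>2 \<le> ennreal (u * op_norm p (cov P i)))"

definition class_P0 :: "nat \<Rightarrow> nat \<Rightarrow> real \<Rightarrow> real \<Rightarrow> data measure \<Rightarrow> bool" where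
  "class_P0 p n u \<sigma> P \<longleftrightarrow> class_Pu p n u P \<and>
     (\<exists>\<Sigma>\<in>PD p. op_norm p \<Sigma> = \<sigma>\<^sup>2 \<and> (\<forall>i\<in>{1..n}. mat_eq p (cov P i) \<Sigma>))"

text \<open>Membership of P in the alternative class P(p,n,s,u,sigma,rho), witnessed by the
  changepoint t0 and the pre/post-change covariance matrices Sigma1, Sigma2.\<close>
definition class_P1_wit :: "nat \<Rightarrow> nat \<Rightarrow> nat \<Rightarrow> real \<Rightarrow> real \<Rightarrow> real \<Rightarrow>
     nat \<Rightarrow> (nat \<Rightarrow> nat \<Rightarrow> real) \<Rightarrow> (nat \<Rightarrow> nat \<Rightarrow> real) \<Rightarrow> data measure \<Rightarrow> bool" where
  "class_P1_wit p n s u \<sigma> \<rho> t0 \<Sigma>1 \<Sigma>2 P \<longleftrightarrow> class_Pu p n u P \<and>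
     t0 \<in> {1..n-1} \<and> \<Sigma>1 \<in> PD p \<and> \<Sigma>2 \<in> PD p \<and>
     (\<forall>i\<in>{1..n}. i \<le> t0 \<longrightarrow> mat_eq p (cov P i) \<Sigma>1) \<and>
     (\<forall>i\<in>{1..n}. t0 < i \<longrightarrow> mat_eq p (cov P i) \<Sigma>2) \<and>
     max (op_norm p \<Sigma>1) (op_norm p \<Sigma>2) \<le> \<sigma>\<^sup>2 \<and>
     (\<lambda>j k. \<Sigma>1 j k - \<Sigma>2 j k) \<in> Mset p s \<and>
     (let D = op_norm p (\<lambda>j k. \<Sigma>1 j k - \<Sigma>2 j k)
      in real (min t0 (n - t0)) * min (D / (\<sigma>\<^sup>2 - D)) ((D / (\<sigma>\<^sup>2 - D))\<^sup>2) = \<rho>)"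

definition Tset :: "nat \<Rightarrow> nat set" where
  "Tset n = {2 ^ k | k. k \<le> nat \<lfloor>log 2 (real n / 2)\<rfloor>}"

definition Sig1hat :: "nat \<Rightarrow> data \<Rightarrow> nat \<Rightarrow> nat \<Rightarrow> real" where
  "Sig1hat t x = (\<lambda>j k. (\<Sum>i=1..t. x i j * x i k) / real t)"

definition Sig2hat :: "nat \<Rightarrow> nat \<Rightarrow> data \<Rightarrow> nat \<Rightarrow> nat \<Rightarrow> real" where
  "Sig2hat n t x = (\<lambda>j k. (\<Sum>i=1..t. x (n - i + 1) j * x (n - i + 1) k) / real t)"

definition Sstat :: "nat \<Rightarrow> nat \<Rightarrow> nat \<Rightarrow> nat \<Rightarrow> data \<Rightarrow> real" where
  "Sstat p n s t x = lam_smax p s (\<lambda>j k. Sig1hat t x j k - Sig2hat n t x j k)"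

definition gam :: "nat \<Rightarrow> nat \<Rightarrow> nat \<Rightarrow> real" where
  "gam p n s = max (real s * ln (exp 1 * real p / real s)) (ln (ln (8 * real n)))"

definition rate :: "nat \<Rightarrow> nat \<Rightarrow> nat \<Rightarrow> nat \<Rightarrow> real" where
  "rate p n s t = max (sqrt (gam p n s / real t)) (gam p n s / real t)"

definition psi_test :: "nat \<Rightarrow> nat \<Rightarrow> nat \<Rightarrow> real \<Rightarrow> real \<Rightarrow> data \<Rightarrow> real" where
  "psi_test p n s \<sigma> lam x =
     (if \<exists>t\<in>Tset n. Sstat p n s t x > lam * \<sigma>\<^sup>2 * rate p n s t then 1 else 0)"

end

theory Submission
  imports Defs
begin

text \<open>
  For a fixed \<open>w\<close> with \<open>\<parallel>w\<parallel> \<le> 1\<close>, the quadratic form \<open>w\<^sup>T (\<Sigma>1hat\<^sub>t - \<Sigma>2hat\<^sub>t) w\<close> is \<open>1/t\<close> times a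
  sum of \<open>2t\<close> independent signed squares of the sub-Gaussian projections \<open>w\<^sup>T X\<^sub>i\<close>.  These
  are sub-exponential with scale \<open>B = 16 u \<sigma>\<^sup>2\<close>, so by Bernstein's inequality the form
  deviates from its mean by \<open>y\<close> with probability at most
  \<open>2 exp (- min (t y\<^sup>2 / 8B\<^sup>2) (t y / 2B))\<close>.

  Under the null the mean vanishes.  Rounding \<open>4 sqrt s \<cdot> v\<close> towards zero and polarising shows
  that \<open>\<lambda>\<^sup>s\<^sub>m\<^sub>a\<^sub>x\<close> is at most twice the maximum of the form over an integer lattice net of at
  most \<open>(ep/s)\<^bsup>32s\<^esup> \<le> exp (32\<gamma>)\<close> points; with at most \<open>2 exp \<gamma>\<close> scales in \<open>T\<close>, a union bound
  gives type I error \<open>\<delta>/2\<close> once \<open>\<lambda> \<ge> 128 u (33 + ln (8/\<delta>))\<close>.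

  Under the alternative take the dyadic \<open>t\<close> with \<open>t \<le> min t0 (n - t0) < 2t\<close> and a sparse unit
  \<open>v\<close> almost attaining \<open>\<lambda>\<^sup>s\<^sub>m\<^sub>a\<^sub>x (\<Sigma>1 - \<Sigma>2) = \<parallel>\<Sigma>1 - \<Sigma>2\<parallel>\<close>: the signal condition makes the mean
  \<open>v\<^sup>T (\<Sigma>1 - \<Sigma>2) v\<close> exceed \<open>3/2\<close> times the threshold, so one deviation bound at \<open>v\<close> gives
  type II error \<open>\<delta>/2\<close>.
\<close>

section \<open>Quadratic forms and the sparse maximal eigenvalue\<close>

definition sqnorm :: "nat \<Rightarrow> (nat \<Rightarrow> real) \<Rightarrow> real" where
  "sqnorm p v = (\<Sum>j<p. (v j)\<^sup>2)"

definition bilin :: "nat \<Rightarrow> (nat \<Rightarrow> nat \<Rightarrow> real) \<Rightarrow> (nat \<Rightarrow> real) \<Rightarrow> (nat \<Rightarrow> real) \<Rightarrow> real" where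
  "bilin p A x y = (\<Sum>i<p. \<Sum>j<p. x i * A i j * y j)"

definition supported_on :: "nat set \<Rightarrow> (nat \<Rightarrow> real) \<Rightarrow> bool" where
  "supported_on S x \<longleftrightarrow> (\<forall>j. j \<notin> S \<longrightarrow> x j = 0)"

lemma sqnorm_nonneg: "0 \<le> sqnorm p v"
  unfolding sqnorm_def by (intro sum_nonneg) auto

lemma sphere_p_iff: "v \<in> sphere_p p \<longleftrightarrow> sqnorm p v = 1 \<and> (\<forall>j\<ge>p. v j = 0)"
  unfolding sphere_p_def vnorm_def sqnorm_def by auto

lemma sqnorm_eq_0D:
  assumes "sqnorm p x = 0" "j < p"
  shows "x j = 0"
proof -
  have "\<forall>j\<in>{..<p}. (x j)\<^sup>2 = 0"
    using assms(1) unfolding sqnorm_def by (subst sum_nonneg_eq_0_iff[symmetric]) auto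
  then show ?thesis using assms(2) by auto
qed

lemma sqnorm_scale: "sqnorm p (\<lambda>j. a * x j) = a\<^sup>2 * sqnorm p x"
  unfolding sqnorm_def by (simp add: sum_distrib_left power_mult_distrib)

lemma sqnorm_parallelogram:
  "sqnorm p (\<lambda>j. x j + y j) + sqnorm p (\<lambda>j. x j - y j) = 2 * sqnorm p x + 2 * sqnorm p y"
  unfolding sqnorm_def
  by (simp add: sum.distrib[symmetric] sum_distrib_left power2_eq_square algebra_simps)

lemma quadf_eq_bilin: "quadf p A v = bilin p A v v"
  unfolding quadf_def bilin_def by simp

lemma bilin_scale: "bilin p A (\<lambda>j. a * x j) (\<lambda>j. b * y j) = a * b * bilin p A x y"
  unfolding bilin_def by (simp add: sum_distrib_left algebra_simps)

lemma quadf_scale: "quadf p A (\<lambda>j. a * x j) = a\<^sup>2 * quadf p A x"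
  unfolding quadf_eq_bilin bilin_scale by (simp add: power2_eq_square)

lemma bilin_add_left: "bilin p A (\<lambda>j. x j + y j) z = bilin p A x z + bilin p A y z"
  unfolding bilin_def by (simp add: sum.distrib algebra_simps)

lemma bilin_add_right: "bilin p A z (\<lambda>j. x j + y j) = bilin p A z x + bilin p A z y"
  unfolding bilin_def by (simp add: sum.distrib algebra_simps)

lemma bilin_diff_left: "bilin p A (\<lambda>j. x j - y j) z = bilin p A x z - bilin p A y z"
  unfolding bilin_def by (simp add: sum_subtractf algebra_simps)

lemma bilin_diff_right: "bilin p A z (\<lambda>j. x j - y j) = bilin p A z x - bilin p A z y"
  unfolding bilin_def by (simp add: sum_subtractf algebra_simps)

lemma bilin_commute:
  assumes "symm p A"
  shows "bilin p A x y = bilin p A y x"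
proof -
  have "bilin p A x y = (\<Sum>j<p. \<Sum>i<p. x i * A i j * y j)"
    unfolding bilin_def by (rule sum.swap)
  also have "\<dots> = bilin p A y x"
    unfolding bilin_def using assms unfolding symm_def by (intro sum.cong refl) (auto simp: mult_ac)
  finally show ?thesis .
qed

lemma bilin_polarization:
  assumes "symm p A"
  shows "4 * bilin p A x y = quadf p A (\<lambda>j. x j + y j) - quadf p A (\<lambda>j. x j - y j)"
  unfolding quadf_eq_bilin bilin_add_left bilin_add_right bilin_diff_left bilin_diff_right
  using bilin_commute[OF assms, of x y] by simp

lemma quadf_diff_eq_bilin:
  assumes "symm p A"
  shows "quadf p A v - quadf p A w = bilin p A (\<lambda>j. v j - w j) (\<lambda>j. v j + w j)"
  unfolding quadf_eq_bilin bilin_add_left bilin_add_right bilin_diff_left bilin_diff_right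
  using bilin_commute[OF assms, of v w] by simp

lemma bilin_eq_0I:
  assumes "sqnorm p x = 0 \<or> sqnorm p y = 0"
  shows "bilin p A x y = 0"
proof -
  have "(\<forall>i<p. x i = 0) \<or> (\<forall>j<p. y j = 0)"
    using assms sqnorm_eq_0D by blast
  then show ?thesis unfolding bilin_def by auto
qed

lemma quadf_cong: "mat_eq p A B \<Longrightarrow> quadf p A v = quadf p B v"
  unfolding mat_eq_def quadf_def by (intro sum.cong refl) auto

lemma op_norm_cong: "mat_eq p A B \<Longrightarrow> op_norm p A = op_norm p B"
proof -
  assume "mat_eq p A B"
  then have "matvec p A = matvec p B"
    unfolding matvec_def mat_eq_def by (intro ext) auto
  then show ?thesis unfolding op_norm_def by simp
qed

lemma sphere_p_abs_le_1:
  assumes "v \<in> sphere_p p" "j < p"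
  shows "\<bar>v j\<bar> \<le> 1"
proof -
  have "(v j)\<^sup>2 \<le> sqnorm p v"
    unfolding sqnorm_def using assms(2) by (intro member_le_sum) auto
  also have "\<dots> = 1" using assms(1) by (simp add: sphere_p_iff)
  finally show ?thesis by (simp add: abs_square_le_1)
qed

lemma abs_quadf_sphere_le:
  assumes "v \<in> sphere_p p"
  shows "\<bar>quadf p A v\<bar> \<le> (\<Sum>i<p. \<Sum>j<p. \<bar>A i j\<bar>)"
proof -
  have "\<bar>quadf p A v\<bar> \<le> (\<Sum>i<p. \<Sum>j<p. \<bar>v i * A i j * v j\<bar>)"
    unfolding quadf_def by (rule order_trans[OF sum_abs]) (intro sum_mono sum_abs)
  also have "\<dots> \<le> (\<Sum>i<p. \<Sum>j<p. \<bar>A i j\<bar>)"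
  proof (intro sum_mono)
    fix i j assume "i \<in> {..<p}" "j \<in> {..<p}"
    then have "\<bar>v i\<bar> \<le> 1" "\<bar>v j\<bar> \<le> 1" using sphere_p_abs_le_1[OF assms] by auto
    then have "\<bar>v i\<bar> * \<bar>A i j\<bar> * \<bar>v j\<bar> \<le> 1 * \<bar>A i j\<bar> * 1"
      by (intro mult_mono) auto
    then show "\<bar>v i * A i j * v j\<bar> \<le> \<bar>A i j\<bar>" by (simp add: abs_mult)
  qed
  finally show ?thesis .
qed

lemma bdd_above_abs_quadf_sparse_sphere:
  "bdd_above ((\<lambda>v. \<bar>quadf p A v\<bar>) ` sparse_sphere p s)"
  by (rule bdd_aboveI2[where M="\<Sum>i<p. \<Sum>j<p. \<bar>A i j\<bar>"])
     (auto simp: sparse_sphere_def intro: abs_quadf_sphere_le)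

lemma first_unit_vector_in_sparse_sphere:
  assumes "1 \<le> p" "1 \<le> s"
  shows "(\<lambda>j. if j = 0 then 1 else 0) \<in> sparse_sphere p s"
proof -
  have "{j. j < p \<and> (if j = 0 then 1 else 0::real) \<noteq> 0} = {0}" using assms by auto
  moreover have "(\<Sum>j<p. (if j = 0 then 1 else 0::real)\<^sup>2) = (\<Sum>j<p. if j = 0 then 1 else 0)"
    by (intro sum.cong) auto
  then have "sqnorm p (\<lambda>j. if j = 0 then 1 else 0) = 1"
    unfolding sqnorm_def using assms by simp
  ultimately show ?thesis using assms unfolding sparse_sphere_def sphere_p_iff by auto
qed

lemma sparse_sphere_nonempty: "1 \<le> p \<Longrightarrow> 1 \<le> s \<Longrightarrow> sparse_sphere p s \<noteq> {}"
  using first_unit_vector_in_sparse_sphere by blast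

lemma abs_quadf_le_lam_smax: "v \<in> sparse_sphere p s \<Longrightarrow> \<bar>quadf p A v\<bar> \<le> lam_smax p s A"
  unfolding lam_smax_def by (rule cSUP_upper[OF _ bdd_above_abs_quadf_sparse_sphere])

lemma lam_smax_nonneg: "1 \<le> p \<Longrightarrow> 1 \<le> s \<Longrightarrow> 0 \<le> lam_smax p s A"
  using abs_quadf_le_lam_smax[OF first_unit_vector_in_sparse_sphere] by (meson abs_ge_zero order_trans)

lemma abs_quadf_le_lam_smax_sqnorm:
  assumes "1 \<le> p" "1 \<le> s" "S \<subseteq> {..<p}" "card S \<le> s" "supported_on S x"
  shows "\<bar>quadf p A x\<bar> \<le> lam_smax p s A * sqnorm p x"
proof (cases "sqnorm p x = 0")
  case True
  then show ?thesis using bilin_eq_0I[of p x x A] by (simp add: quadf_eq_bilin)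
next
  case False
  then have pos: "0 < sqnorm p x" using sqnorm_nonneg[of p x] by auto
  define c where "c = 1 / sqrt (sqnorm p x)"
  define v where "v = (\<lambda>j. c * x j)"
  have "sqnorm p v = 1"
    unfolding v_def sqnorm_scale c_def using pos by (simp add: power_divide)
  moreover have "{j. j < p \<and> v j \<noteq> 0} \<subseteq> S" "\<forall>j\<ge>p. v j = 0"
    using assms(3,5) unfolding supported_on_def v_def by auto
  moreover have "finite S" using assms(3) finite_subset by blast
  ultimately have "v \<in> sparse_sphere p s"
    unfolding sparse_sphere_def sphere_p_iff
    using assms(4) card_mono[of S "{j. j < p \<and> v j \<noteq> 0}"] by auto
  then have "\<bar>quadf p A v\<bar> \<le> lam_smax p s A" by (rule abs_quadf_le_lam_smax)
  moreover have "quadf p A x = sqnorm p x * quadf p A v"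
    unfolding v_def quadf_scale c_def using pos by (simp add: power_divide)
  ultimately show ?thesis using pos by (simp add: abs_mult mult.commute mult_left_mono)
qed

lemma abs_bilin_le_lam_smax:
  assumes A: "symm p A" and ps: "1 \<le> p" "1 \<le> s" and S: "S \<subseteq> {..<p}" "card S \<le> s"
    and xy: "supported_on S x" "supported_on S y"
  shows "\<bar>bilin p A x y\<bar> \<le> lam_smax p s A * sqrt (sqnorm p x) * sqrt (sqnorm p y)"
proof (cases "sqnorm p x = 0 \<or> sqnorm p y = 0")
  case True
  then show ?thesis
    using bilin_eq_0I[OF True] lam_smax_nonneg[OF ps] by (simp add: mult_nonneg_nonneg sqnorm_nonneg)
next
  case False
  define a b where "a = sqrt (sqnorm p x)" and "b = sqrt (sqnorm p y)"
  have ab: "0 < a" "0 < b"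
    using False sqnorm_nonneg[of p x] sqnorm_nonneg[of p y] unfolding a_def b_def by auto
  define x' y' where "x' = (\<lambda>j. (1 / a) * x j)" and "y' = (\<lambda>j. (1 / b) * y j)"
  have unit: "sqnorm p x' = 1" "sqnorm p y' = 1"
    unfolding x'_def y'_def sqnorm_scale a_def b_def
    using False sqnorm_nonneg[of p x] sqnorm_nonneg[of p y] by (auto simp: power_divide)
  have supp: "supported_on S (\<lambda>j. x' j + y' j)" "supported_on S (\<lambda>j. x' j - y' j)"
    using xy unfolding supported_on_def x'_def y'_def by auto
  have "4 * \<bar>bilin p A x' y'\<bar> = \<bar>quadf p A (\<lambda>j. x' j + y' j) - quadf p A (\<lambda>j. x' j - y' j)\<bar>"
    unfolding bilin_polarization[OF A, symmetric] by simp
  also have "\<dots> \<le> lam_smax p s A * sqnorm p (\<lambda>j. x' j + y' j)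
                 + lam_smax p s A * sqnorm p (\<lambda>j. x' j - y' j)"
    using abs_quadf_le_lam_smax_sqnorm[OF ps S supp(1), of A]
      abs_quadf_le_lam_smax_sqnorm[OF ps S supp(2), of A] by linarith
  also have "\<dots> = 4 * lam_smax p s A"
    unfolding distrib_left[symmetric] sqnorm_parallelogram unit by simp
  finally have "\<bar>bilin p A x' y'\<bar> \<le> lam_smax p s A" by simp
  moreover have "\<bar>bilin p A x y\<bar> = a * b * \<bar>bilin p A x' y'\<bar>"
    unfolding x'_def y'_def bilin_scale using ab by (simp add: abs_mult)
  ultimately show ?thesis
    using ab unfolding a_def[symmetric] b_def[symmetric] by (simp add: mult_left_mono mult_ac)
qed

section \<open>A lattice net for sparse unit vectors\<close>

definition round_to_zero :: "real \<Rightarrow> int" where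
  "round_to_zero r = (if 0 \<le> r then \<lfloor>r\<rfloor> else \<lceil>r\<rceil>)"

lemma abs_round_to_zero_le: "\<bar>real_of_int (round_to_zero r)\<bar> \<le> \<bar>r\<bar>"
  unfolding round_to_zero_def by (cases "0 \<le> r") (use floor_correct[of r] ceiling_correct[of r] in auto)

lemma abs_sub_round_to_zero_less: "\<bar>r - real_of_int (round_to_zero r)\<bar> < 1"
proof (cases "0 \<le> r")
  case True
  have "r < real_of_int \<lfloor>r\<rfloor> + 1" "real_of_int \<lfloor>r\<rfloor> \<le> r" using floor_correct[of r] by auto
  moreover have "round_to_zero r = \<lfloor>r\<rfloor>" using True unfolding round_to_zero_def by simp
  ultimately show ?thesis unfolding abs_less_iff by linarith
next
  case False
  have "real_of_int \<lceil>r\<rceil> - 1 < r" "r \<le> real_of_int \<lceil>r\<rceil>" using ceiling_correct[of r] by auto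
  moreover have "round_to_zero r = \<lceil>r\<rceil>" using False unfolding round_to_zero_def by simp
  ultimately show ?thesis unfolding abs_less_iff by linarith
qed

definition lattice_net :: "nat \<Rightarrow> nat \<Rightarrow> (nat \<Rightarrow> int) set" where
  "lattice_net p s = {z. (\<forall>j\<ge>p. z j = 0) \<and> (\<Sum>j<p. (z j)\<^sup>2) \<le> 16 * int s}"

definition net_point :: "nat \<Rightarrow> (nat \<Rightarrow> int) \<Rightarrow> nat \<Rightarrow> real" where
  "net_point s z = (\<lambda>j. real_of_int (z j) / (4 * sqrt (real s)))"

lemma sqnorm_net_point_le:
  assumes "z \<in> lattice_net p s" "1 \<le> s"
  shows "sqnorm p (net_point s z) \<le> 1"
proof -
  have "real_of_int (\<Sum>j<p. (z j)\<^sup>2) \<le> 16 * real s"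
    using assms(1) unfolding lattice_net_def
    by (simp only: mem_Collect_eq) (metis of_int_le_iff of_int_mult of_int_numeral of_int_of_nat_eq)
  moreover have "sqnorm p (net_point s z) = (\<Sum>j<p. real_of_int ((z j)\<^sup>2)) / (16 * real s)"
    unfolding sqnorm_def net_point_def by (simp add: power_divide power_mult_distrib sum_divide_distrib)
  ultimately show ?thesis using assms(2) by simp
qed

text \<open>Rounding \<open>4 sqrt s \<cdot> v\<close> towards zero moves each of its at most \<open>s\<close> nonzero
  coordinates by less than \<open>1\<close>, so the squared error after rescaling is below \<open>s / (16 s)\<close>.\<close>

lemma sparse_sphere_near_net:
  assumes s: "1 \<le> s" and v: "v \<in> sparse_sphere p s"
  obtains z where "z \<in> lattice_net p s" "\<And>j. \<bar>net_point s z j\<bar> \<le> \<bar>v j\<bar>"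
    "sqnorm p (\<lambda>j. v j - net_point s z j) \<le> 1 / 16"
proof
  define L where "L = 4 * sqrt (real s)"
  have L: "0 < L" "L\<^sup>2 = 16 * real s" unfolding L_def using s by (auto simp: power_mult_distrib)
  define z where "z j = (if j < p then round_to_zero (v j * L) else 0)" for j
  have vp: "\<forall>j\<ge>p. v j = 0" and nv: "sqnorm p v = 1"
    using v unfolding sparse_sphere_def sphere_p_iff by auto
  define S where "S = {j. j < p \<and> v j \<noteq> 0}"
  have cS: "card S \<le> s" using v unfolding sparse_sphere_def S_def by auto
  have wj: "net_point s z j = real_of_int (z j) / L" for j
    unfolding net_point_def L_def by simp
  have zabs: "\<bar>real_of_int (z j)\<bar> \<le> \<bar>v j * L\<bar>" for j
    unfolding z_def using abs_round_to_zero_le[of "v j * L"] by auto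
  then show "\<bar>net_point s z j\<bar> \<le> \<bar>v j\<bar>" for j
    unfolding wj using L by (simp add: divide_le_eq abs_div abs_mult)
  have "real_of_int (\<Sum>j<p. (z j)\<^sup>2) \<le> (\<Sum>j<p. (v j * L)\<^sup>2)"
    unfolding of_int_sum of_int_power using zabs by (intro sum_mono) (simp add: abs_le_square_iff)
  also have "\<dots> = 16 * real s"
    using nv L unfolding sqnorm_def by (simp add: sum_distrib_right[symmetric] power_mult_distrib)
  finally have "real_of_int (\<Sum>j<p. (z j)\<^sup>2) \<le> real_of_int (16 * int s)" by simp
  then show "z \<in> lattice_net p s"
    unfolding lattice_net_def z_def by (simp only: of_int_le_iff) auto
  have dj: "(v j - net_point s z j)\<^sup>2 \<le> (if j \<in> S then 1 / L\<^sup>2 else 0)" if "j < p" for j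
  proof -
    have "\<bar>v j * L - real_of_int (z j)\<bar> \<le> 1"
      unfolding z_def using abs_sub_round_to_zero_less[of "v j * L"] that by auto
    moreover have "v j * L - real_of_int (z j) = (v j - net_point s z j) * L"
      unfolding wj using L by (simp add: field_simps)
    ultimately have "\<bar>v j - net_point s z j\<bar> \<le> 1 / L"
      using L by (simp add: abs_mult le_divide_eq)
    then have "(v j - net_point s z j)\<^sup>2 \<le> (1 / L)\<^sup>2"
      by (metis abs_ge_zero power2_abs power_mono)
    moreover have "j \<notin> S \<Longrightarrow> v j - net_point s z j = 0"
      unfolding S_def wj z_def round_to_zero_def using that by simp
    ultimately show ?thesis by (auto simp: power_divide)
  qed
  have "sqnorm p (\<lambda>j. v j - net_point s z j) \<le> (\<Sum>j<p. if j \<in> S then 1 / L\<^sup>2 else 0)"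
    unfolding sqnorm_def using dj by (intro sum_mono) auto
  also have "\<dots> = card S / L\<^sup>2"
    unfolding S_def by (simp add: sum.If_cases Int_def conj_commute)
  also have "\<dots> \<le> 1 / 16"
    using cS s unfolding L by (simp add: divide_le_eq)
  finally show "sqnorm p (\<lambda>j. v j - net_point s z j) \<le> 1 / 16" .
qed

text \<open>Via \<open>v\<^sup>T A v - w\<^sup>T A w = (v - w)\<^sup>T A (v + w)\<close> with \<open>\<parallel>v - w\<parallel> \<le> 1/4\<close> and \<open>\<parallel>v + w\<parallel> \<le> 2\<close>.\<close>

lemma sparse_net_approx:
  assumes ps: "1 \<le> p" "1 \<le> s" and A: "symm p A" and v: "v \<in> sparse_sphere p s"
  shows "\<exists>z\<in>lattice_net p s. \<bar>quadf p A v\<bar> \<le> \<bar>quadf p A (net_point s z)\<bar> + lam_smax p s A / 2"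
proof -
  obtain z where z: "z \<in> lattice_net p s" and wv: "\<And>j. \<bar>net_point s z j\<bar> \<le> \<bar>v j\<bar>"
    and nd: "sqnorm p (\<lambda>j. v j - net_point s z j) \<le> 1 / 16"
    using sparse_sphere_near_net[OF ps(2) v] by blast
  define w where "w = net_point s z"
  define S where "S = {j. j < p \<and> v j \<noteq> 0}"
  have S: "S \<subseteq> {..<p}" "card S \<le> s" using v unfolding sparse_sphere_def S_def by auto
  have vp: "\<forall>j\<ge>p. v j = 0" and nv: "sqnorm p v = 1"
    using v unfolding sparse_sphere_def sphere_p_iff by auto
  have "w j = 0" if "v j = 0" for j using wv[of j] that unfolding w_def by simp
  then have supp: "supported_on S (\<lambda>j. v j - w j)" "supported_on S (\<lambda>j. v j + w j)"
    unfolding supported_on_def S_def using vp by (auto simp: not_less)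
  have "sqnorm p (\<lambda>j. v j + w j) \<le> (\<Sum>j<p. 2\<^sup>2 * (v j)\<^sup>2)"
    unfolding sqnorm_def
  proof (intro sum_mono)
    fix j
    have "\<bar>v j + w j\<bar> \<le> \<bar>2 * v j\<bar>" using wv[of j] unfolding w_def by simp
    then show "(v j + w j)\<^sup>2 \<le> 2\<^sup>2 * (v j)\<^sup>2"
      by (metis abs_le_square_iff power_mult_distrib)
  qed
  also have "\<dots> = 4" using nv unfolding sqnorm_def by (simp add: sum_distrib_left[symmetric])
  finally have ne: "sqnorm p (\<lambda>j. v j + w j) \<le> 4" .
  have "\<bar>quadf p A v - quadf p A w\<bar> = \<bar>bilin p A (\<lambda>j. v j - w j) (\<lambda>j. v j + w j)\<bar>"
    unfolding quadf_diff_eq_bilin[OF A] ..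
  also have "\<dots> \<le> lam_smax p s A * sqrt (sqnorm p (\<lambda>j. v j - w j)) * sqrt (sqnorm p (\<lambda>j. v j + w j))"
    by (rule abs_bilin_le_lam_smax[OF A ps S supp])
  also have "\<dots> \<le> lam_smax p s A * sqrt (1 / 16) * sqrt 4"
    using lam_smax_nonneg[OF ps] nd ne sqnorm_nonneg unfolding w_def
    by (intro mult_mono mult_left_mono real_sqrt_le_mono) auto
  also have "\<dots> = lam_smax p s A / 2"
    by (simp add: real_sqrt_divide)
  finally have "\<bar>quadf p A v\<bar> \<le> \<bar>quadf p A w\<bar> + lam_smax p s A / 2" by linarith
  with z show ?thesis unfolding w_def by blast
qed

lemma net_point_exceeds:
  assumes "1 \<le> p" "1 \<le> s" "symm p A" "c < lam_smax p s A"
  shows "\<exists>z\<in>lattice_net p s. c / 2 < \<bar>quadf p A (net_point s z)\<bar>"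
proof (rule ccontr)
  assume "\<not> ?thesis"
  then have "\<bar>quadf p A v\<bar> \<le> c / 2 + lam_smax p s A / 2" if "v \<in> sparse_sphere p s" for v
    using sparse_net_approx[OF assms(1-3) that] by force
  then have "lam_smax p s A \<le> c / 2 + lam_smax p s A / 2"
    unfolding lam_smax_def by (intro cSUP_least sparse_sphere_nonempty assms(1,2)) (auto simp: lam_smax_def)
  then show False using assms(4) by linarith
qed

lemma power_div_fact_le_exp: "0 \<le> (x::real) \<Longrightarrow> x ^ n / fact n \<le> exp x"
proof -
  assume x: "0 \<le> x"
  have "(\<Sum>i\<in>{n}. x ^ i /\<^sub>R fact i) \<le> (\<Sum>i. x ^ i /\<^sub>R fact i)"
    by (rule sum_le_suminf[OF summable_exp_generic]) (use x in auto)
  then show ?thesis by (simp add: exp_def divide_inverse mult.commute)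
qed

lemma binomial_le_exp_pow:
  assumes "0 < k"
  shows "real (n choose k) \<le> (exp 1 * n / k) ^ k"
proof -
  have "real ((n choose k) * fact k) \<le> real (n ^ k)"
    by (simp only: of_nat_le_iff binomial_fact_pow)
  then have "real (n choose k) \<le> real n ^ k * (1 / fact k)" by (simp add: field_simps)
  also have "\<dots> \<le> real n ^ k * (exp (real k) / real k ^ k)"
    using power_div_fact_le_exp[of "real k" k] assms by (intro mult_left_mono) (auto simp: field_simps)
  also have "\<dots> = (exp 1 * n / k) ^ k"
    by (simp add: power_divide power_mult_distrib exp_of_nat_mult[symmetric])
  finally show ?thesis .
qed

lemma abs_le_power2_int: "\<bar>x::int\<bar> \<le> x\<^sup>2"
proof (cases "x = 0")
  case False
  then have "\<bar>x\<bar> * 1 \<le> \<bar>x\<bar> * \<bar>x\<bar>" by (intro mult_left_mono) auto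
  then show ?thesis by (simp add: power2_eq_square abs_mult[symmetric])
qed simp

text \<open>Stars and bars: positive parts, negative parts and a slack entry encode a net point as a
  list of \<open>2p + 1\<close> naturals with sum \<open>16 s\<close>, because \<open>\<Sum>\<bar>z\<^sub>j\<bar> \<le> \<Sum>z\<^sub>j\<^sup>2 \<le> 16 s\<close>.\<close>

definition net_code :: "nat \<Rightarrow> nat \<Rightarrow> (nat \<Rightarrow> int) \<Rightarrow> nat list" where
  "net_code p M z = map (\<lambda>j. nat (z j)) [0..<p] @ map (\<lambda>j. nat (- z j)) [0..<p]
     @ [M - (\<Sum>j<p. nat \<bar>z j\<bar>)]"

lemma net_code_mem:
  assumes "z \<in> lattice_net p s"
  shows "net_code p (16 * s) z \<in> {l. length l = 2 * p + 1 \<and> sum_list l = 16 * s}"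
proof -
  have "int (\<Sum>j<p. nat \<bar>z j\<bar>) = (\<Sum>j<p. \<bar>z j\<bar>)" by simp
  also have "\<dots> \<le> (\<Sum>j<p. (z j)\<^sup>2)" by (intro sum_mono abs_le_power2_int)
  also have "\<dots> \<le> 16 * int s" using assms unfolding lattice_net_def by simp
  finally have le: "(\<Sum>j<p. nat \<bar>z j\<bar>) \<le> 16 * s" by linarith
  have sl: "sum_list (map f [0..<p]) = (\<Sum>j<p. f j)" for f :: "nat \<Rightarrow> nat"
    by (simp add: sum_set_upt_conv_sum_list_nat[symmetric] atLeast0LessThan)
  have "(\<Sum>j<p. nat (z j)) + (\<Sum>j<p. nat (- z j)) = (\<Sum>j<p. nat \<bar>z j\<bar>)"
    by (simp add: sum.distrib[symmetric]) (intro sum.cong, auto)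
  then show ?thesis unfolding net_code_def using le by (simp add: sl)
qed

lemma inj_on_net_code: "inj_on (net_code p M) (lattice_net p s)"
proof (rule inj_onI)
  fix z1 z2 assume z: "z1 \<in> lattice_net p s" "z2 \<in> lattice_net p s"
    and "net_code p M z1 = net_code p M z2"
  then have parts: "\<forall>j<p. nat (z1 j) = nat (z2 j) \<and> nat (- z1 j) = nat (- z2 j)"
    unfolding net_code_def by (simp add: append_eq_append_conv map_eq_conv)
  have "z1 j = z2 j" if "j < p" for j
  proof -
    have "nat (z1 j) = nat (z2 j)" "nat (- z1 j) = nat (- z2 j)" using parts that by auto
    then show ?thesis by linarith
  qed
  moreover have "z1 j = z2 j" if "\<not> j < p" for j using z that unfolding lattice_net_def by auto
  ultimately show "z1 = z2" by blast
qed

lemma finite_lists_sum_list_eq: "finite {l::nat list. length l = m \<and> sum_list l = N}"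
proof (rule finite_subset[OF _ finite_lists_length_eq[of "{0..N}" m]])
  show "{l::nat list. length l = m \<and> sum_list l = N} \<subseteq> {l. set l \<subseteq> {0..N} \<and> length l = m}"
    using elem_le_sum_list by (fastforce simp: in_set_conv_nth)
qed simp

lemma finite_lattice_net: "finite (lattice_net p s)"
  using finite_imageD[OF finite_subset[OF _ finite_lists_sum_list_eq] inj_on_net_code]
    net_code_mem by blast

lemma card_lattice_net_le:
  assumes "1 \<le> s" "s \<le> p"
  shows "real (card (lattice_net p s)) \<le> (exp 1 * p / s) ^ (32 * s)"
proof -
  have "card (lattice_net p s) \<le> card {l::nat list. length l = 2 * p + 1 \<and> sum_list l = 16 * s}"
    by (intro card_inj_on_le[OF inj_on_net_code] finite_lists_sum_list_eq) (use net_code_mem in blast)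
  also have "\<dots> = (16 * s + 2 * p) choose (16 * s)" by (simp add: card_length_sum_list)
  finally have "real (card (lattice_net p s)) \<le> real ((16 * s + 2 * p) choose (16 * s))" by simp
  also have "\<dots> \<le> (exp 1 * real (16 * s + 2 * p) / real (16 * s)) ^ (16 * s)"
    by (rule binomial_le_exp_pow) (use assms in simp)
  also have "\<dots> \<le> ((exp 1 * p / s)\<^sup>2) ^ (16 * s)"
  proof (rule power_mono)
    have sp: "real s \<le> real p" "1 \<le> real s" using assms by auto
    have "exp 1 * real (16 * s + 2 * p) / real (16 * s) \<le> exp 1 * (2 * p / s)"
      using sp by (simp add: field_simps)
    also have "\<dots> = 2 * (exp 1 * p / s)" by simp
    also have "\<dots> \<le> (exp 1 * p / s) * (exp 1 * p / s)"
    proof (rule mult_right_mono)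
      have "2 * 1 \<le> exp 1 * (p / s)"
        using exp_ge_add_one_self[of 1] sp by (intro mult_mono) auto
      then show "2 \<le> exp 1 * p / s" by simp
    qed simp
    finally show "exp 1 * real (16 * s + 2 * p) / real (16 * s) \<le> (exp 1 * p / s)\<^sup>2"
      by (simp add: power2_eq_square)
  qed simp
  also have "\<dots> = (exp 1 * p / s) ^ (32 * s)" by (simp add: power_mult[symmetric])
  finally show ?thesis .
qed

lemma Tset_eq_image: "Tset n = (\<lambda>k. 2 ^ k) ` {..nat \<lfloor>log 2 (real n / 2)\<rfloor>}"
  unfolding Tset_def by auto

lemma finite_Tset: "finite (Tset n)"
  unfolding Tset_eq_image by simp

lemma Tset_memD:
  assumes "2 \<le> n" "t \<in> Tset n"
  shows "1 \<le> t" "2 * t \<le> n"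
proof -
  obtain k where t: "t = 2 ^ k" and k: "k \<le> nat \<lfloor>log 2 (real n / 2)\<rfloor>"
    using assms(2) unfolding Tset_def by auto
  show "1 \<le> t" unfolding t by simp
  have "0 \<le> log 2 (real n / 2)" using assms by simp
  then have "real k \<le> log 2 (real n / 2)" using k by linarith
  then have "2 powr real k \<le> real n / 2" using le_log_iff[of 2 "real n / 2"] assms by simp
  then have "real (2 ^ k) \<le> real n / 2" by (simp add: powr_realpow)
  then show "2 * t \<le> n" unfolding t by linarith
qed

lemma card_Tset_le:
  assumes "2 \<le> n"
  shows "real (card (Tset n)) \<le> 2 * ln (8 * real n)"
proof -
  let ?K = "nat \<lfloor>log 2 (real n / 2)\<rfloor>"
  have "card (Tset n) \<le> card {..?K}" unfolding Tset_eq_image by (rule card_image_le) simp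
  then have "real (card (Tset n)) \<le> real ?K + 1" by simp
  also have "real ?K \<le> log 2 (real n / 2)" using assms by simp
  also have "log 2 (real n / 2) = log 2 (real n) - 1" using assms by (simp add: log_divide)
  also have "log 2 (real n) - 1 + 1 = ln (real n) / ln 2" by (simp add: log_def)
  also have "\<dots> \<le> ln (real n) / (2/3)"
    using ln2_ge_two_thirds assms by (intro divide_left_mono) auto
  also have "\<dots> \<le> 2 * ln (8 * real n)"
  proof -
    have "ln (real n) \<le> ln (8 * real n)" "0 \<le> ln (real n)" using assms by simp_all
    then show ?thesis by simp
  qed
  finally show ?thesis by simp
qed

lemma exists_Tset_between:
  assumes "1 \<le> m" "2 * m \<le> n"
  shows "\<exists>t\<in>Tset n. t \<le> m \<and> m < 2 * t"
proof -
  define k where "k = nat \<lfloor>log 2 (real m)\<rfloor>"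
  have "0 \<le> log 2 (real m)" using assms by simp
  then have "\<lfloor>log 2 (real m)\<rfloor> = int k" unfolding k_def by simp
  then have km: "2 ^ k \<le> m \<and> m < 2 ^ (k + 1)"
    using floor_log_nat_eq_powr_iff[of 2 m k] assms by simp
  then have "2 * 2 ^ k \<le> n" using assms by linarith
  then have "real (2 * 2 ^ k) \<le> real n" by (simp only: of_nat_le_iff)
  then have "2 ^ k \<le> real n / 2" by simp
  then have "real k \<le> log 2 (real n / 2)" using le_log_of_power[of 2 k "real n / 2"] by simp
  then have "k \<le> nat \<lfloor>log 2 (real n / 2)\<rfloor>" by (simp add: le_nat_iff le_floor_iff)
  then have "2 ^ k \<in> Tset n" unfolding Tset_def by auto
  with km show ?thesis by auto
qed

lemma gam_ge_1:
  assumes "1 \<le> s" "s \<le> p"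
  shows "1 \<le> gam p n s"
proof -
  have "exp 1 \<le> exp 1 * real p / real s" using assms by (simp add: field_simps)
  then have "1 \<le> ln (exp 1 * real p / real s)"
    using ln_le_cancel_iff[of "exp 1" "exp 1 * real p / real s"] assms by simp
  then have "1 * 1 \<le> real s * ln (exp 1 * real p / real s)"
    using assms(1) by (intro mult_mono) auto
  then show ?thesis unfolding gam_def by simp
qed

lemma ln_le_exp_gam:
  assumes "2 \<le> n"
  shows "ln (8 * real n) \<le> exp (gam p n s)"
proof -
  have "exp (ln (ln (8 * real n))) \<le> exp (gam p n s)" unfolding gam_def by simp
  then show ?thesis using assms by simp
qed

lemma rate_bounds:
  assumes "0 < gam p n s" "1 \<le> t"
  shows "gam p n s \<le> real t * rate p n s t" "gam p n s \<le> real t * (rate p n s t)\<^sup>2"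
    "0 < rate p n s t"
proof -
  let ?g = "gam p n s"
  have t: "0 < real t" using assms by simp
  have r1: "?g / t \<le> rate p n s t" and r2: "sqrt (?g / t) \<le> rate p n s t"
    unfolding rate_def by auto
  show "?g \<le> real t * rate p n s t" using r1 t by (simp add: field_simps)
  have g: "0 < ?g / t" using assms t by simp
  then have "?g / t \<le> (rate p n s t)\<^sup>2"
    using power_mono[OF r2, of 2] by simp
  then show "?g \<le> real t * (rate p n s t)\<^sup>2" using t by (simp add: field_simps)
  show "0 < rate p n s t" using r1 g by linarith
qed

text \<open>The scale \<open>t\<close> ends up \<open>\<ge> \<gamma>\<close>, so the rate is \<open>sqrt (\<gamma>/t)\<close>, and \<open>t D\<^sup>2 \<ge> 4 \<lambda>\<^sup>2 \<gamma> \<sigma>\<^sup>4\<close>.\<close>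

lemma signal_ge_twice_threshold:
  fixes D \<sigma> C lam :: real and m t :: nat
  assumes lam: "1 \<le> lam" and C: "8 * lam\<^sup>2 \<le> C" and g: "1 \<le> gam p n s"
    and \<sigma>: "0 < \<sigma>" and D: "0 \<le> D" "D < \<sigma>\<^sup>2" and t: "1 \<le> t" "m < 2 * t"
    and signal: "C * gam p n s \<le> real m * D\<^sup>2 / \<sigma> ^ 4"
  shows "2 * lam * \<sigma>\<^sup>2 * rate p n s t \<le> D"
proof -
  define g where "g = gam p n s"
  have \<sigma>4: "0 < \<sigma> ^ 4" using \<sigma> by simp
  have "D\<^sup>2 < (\<sigma>\<^sup>2)\<^sup>2" using D by (intro power_strict_mono) auto
  also have "(\<sigma>\<^sup>2)\<^sup>2 = \<sigma> ^ 4" by simp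
  finally have q: "D\<^sup>2 / \<sigma> ^ 4 < 1" using \<sigma>4 by simp
  have "8 * lam\<^sup>2 * g \<le> C * g" using C g unfolding g_def by (intro mult_right_mono) auto
  also have "\<dots> \<le> real m * (D\<^sup>2 / \<sigma> ^ 4)" using signal unfolding g_def by simp
  also have "\<dots> \<le> (2 * real t) * (D\<^sup>2 / \<sigma> ^ 4)" using t \<sigma>4 by (intro mult_right_mono) auto
  finally have key: "4 * lam\<^sup>2 * g \<le> real t * (D\<^sup>2 / \<sigma> ^ 4)" by linarith
  have "4 * g \<le> 4 * lam\<^sup>2 * g" using lam g unfolding g_def by (simp add: one_le_power)
  also have "\<dots> \<le> real t * (D\<^sup>2 / \<sigma> ^ 4)" by (rule key)
  also have "\<dots> < real t" using mult_strict_left_mono[OF q, of "real t"] t(1) by simp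
  finally have gt: "0 < g / t" "g / t \<le> 1" using g t unfolding g_def by auto
  then have "(g / t)\<^sup>2 \<le> g / t" unfolding power2_eq_square by (intro mult_left_le) auto
  then have "g / t \<le> sqrt (g / t)" by (rule real_le_rsqrt)
  then have r: "rate p n s t = sqrt (g / t)" unfolding rate_def g_def[symmetric] by simp
  have "4 * lam\<^sup>2 * (g / t) = (4 * lam\<^sup>2 * g) / t" by simp
  also have "\<dots> \<le> (real t * (D\<^sup>2 / \<sigma> ^ 4)) / t" using key t by (intro divide_right_mono) auto
  also have "\<dots> = D\<^sup>2 / \<sigma> ^ 4" using t by simp
  finally have "\<sigma> ^ 4 * (4 * lam\<^sup>2 * (g / t)) \<le> \<sigma> ^ 4 * (D\<^sup>2 / \<sigma> ^ 4)"
    using \<sigma>4 by (intro mult_left_mono) auto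
  also have "\<sigma> ^ 4 * (4 * lam\<^sup>2 * (g / t)) = (2 * lam * \<sigma>\<^sup>2 * rate p n s t)\<^sup>2"
    unfolding r using gt by (simp add: power_mult_distrib flip: power_mult)
  also have "\<sigma> ^ 4 * (D\<^sup>2 / \<sigma> ^ 4) = D\<^sup>2" using \<sigma>4 by simp
  finally show ?thesis using D(1) by (rule power2_le_imp_le)
qed

section \<open>Sub-exponential tail bounds\<close>

lemma exp_le_quadratic_bound: "exp (x::real) \<le> 1 + x + x\<^sup>2 * exp \<bar>x\<bar>"
proof (cases "0 \<le> x")
  case True
  have "(1 - x) * (1 + x) \<le> exp (- x) * (1 + x)"
    using exp_ge_add_one_self[of "-x"] True by (intro mult_right_mono) auto
  then have "exp x * ((1 - x) * (1 + x)) \<le> exp x * (exp (- x) * (1 + x))" by simp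
  also have "exp x * (exp (- x) * (1 + x)) = 1 + x" by (simp add: exp_minus field_simps)
  finally have "exp x - x\<^sup>2 * exp x \<le> 1 + x" by (simp add: algebra_simps power2_eq_square)
  then show ?thesis using True by simp
next
  case False
  define y where "y = - x"
  have y: "0 < y" using False y_def by simp
  have "exp (- y) \<le> 1 - y + y\<^sup>2"
  proof (cases "1 \<le> y")
    case True
    have "exp (- y) \<le> 1" using y by simp
    moreover have "y \<le> y\<^sup>2" using True by (simp add: power2_eq_square)
    ultimately show ?thesis by linarith
  next
    case False
    have "exp (- y) \<le> 1 / (1 + y)"
      using exp_ge_add_one_self[of y] y by (simp add: exp_minus field_simps)
    also have "1 / (1 + y) \<le> 1 - y + y\<^sup>2"
    proof -
      have "1 \<le> (1 - y + y\<^sup>2) * (1 + y)" using y by (simp add: algebra_simps power2_eq_square)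
      then show ?thesis using y by (simp add: divide_le_eq)
    qed
    finally show ?thesis .
  qed
  moreover have "y\<^sup>2 * 1 \<le> y\<^sup>2 * exp \<bar>x\<bar>" by (intro mult_left_mono) auto
  ultimately show ?thesis unfolding y_def by simp
qed

lemma centred_square_exp_le:
  fixes W m a :: real
  assumes "0 \<le> W" "0 \<le> m" "m \<le> 1" "\<bar>a\<bar> \<le> 1/8"
  shows "(a * (W - m))\<^sup>2 * exp \<bar>a * (W - m)\<bar> \<le> 16 * a\<^sup>2 * exp W"
proof -
  define z where "z = W + 1"
  have z1: "1 \<le> z" and wm: "\<bar>W - m\<bar> \<le> z" using assms unfolding z_def by auto
  have A: "(a * (W - m))\<^sup>2 \<le> a\<^sup>2 * z\<^sup>2"
    using power_mono[OF wm, of 2] by (simp add: power_mult_distrib mult_left_mono)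
  have "\<bar>a * (W - m)\<bar> \<le> (1/8) * z"
    unfolding abs_mult using assms(4) wm by (intro mult_mono) auto
  then have B: "exp \<bar>a * (W - m)\<bar> \<le> exp (z / 8)" by simp
  have "7 * z / 16 \<le> exp (7 * z / 16)" using exp_ge_add_one_self[of "7 * z / 16"] by linarith
  then have "(7 * z / 16)\<^sup>2 \<le> (exp (7 * z / 16))\<^sup>2" using z1 by (intro power_mono) auto
  also have "(exp (7 * z / 16))\<^sup>2 = exp (7 * z / 8)" by (simp add: power2_eq_square exp_add[symmetric])
  finally have C: "z\<^sup>2 \<le> (256/49) * exp (7 * z / 8)" by (simp add: power_divide power_mult_distrib)
  have "z\<^sup>2 * exp (z / 8) \<le> (256/49) * exp (7 * z / 8) * exp (z / 8)"
    using C by (intro mult_right_mono) auto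
  also have "\<dots> = (256/49) * exp z" by (simp add: exp_add[symmetric])
  also have "exp z = exp 1 * exp W" unfolding z_def by (simp add: exp_add)
  also have "(256/49) * (exp 1 * exp W) \<le> (256/49) * (3 * exp W)"
    using exp_le by (intro mult_left_mono mult_right_mono) auto
  also have "\<dots> \<le> 16 * exp W" by simp
  finally have D: "z\<^sup>2 * exp (z / 8) \<le> 16 * exp W" .
  have "(a * (W - m))\<^sup>2 * exp \<bar>a * (W - m)\<bar> \<le> a\<^sup>2 * (z\<^sup>2 * exp (z / 8))"
    using mult_mono[OF A B] by simp
  also have "\<dots> \<le> a\<^sup>2 * (16 * exp W)" using D by (intro mult_left_mono) auto
  finally show ?thesis by simp
qed

lemma chernoff_exponent_le:
  fixes y B :: real and N :: nat
  assumes B: "0 < B" and N: "0 < N"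
  defines "\<theta> \<equiv> min (y / (2 * real N * B\<^sup>2)) (1 / B)"
  shows "-\<theta> * y + N * (\<theta>\<^sup>2 * B\<^sup>2) \<le> - min (y\<^sup>2 / (4 * real N * B\<^sup>2)) (y / (2 * B))"
proof (cases "y / (2 * real N * B\<^sup>2) \<le> 1 / B")
  case True
  then have \<theta>_eq: "\<theta> = y / (2 * real N * B\<^sup>2)" unfolding \<theta>_def by simp
  have "-\<theta> * y + N * (\<theta>\<^sup>2 * B\<^sup>2) = - (y\<^sup>2 / (4 * real N * B\<^sup>2))"
    unfolding \<theta>_eq using B N by (simp add: field_simps power2_eq_square)
  then show ?thesis by simp
next
  case False
  then have \<theta>_eq: "\<theta> = 1 / B" unfolding \<theta>_def by simp
  have "2 * N * B < y"
    using False B N by (simp add: field_simps power2_eq_square)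
  then have "-\<theta> * y + N * (\<theta>\<^sup>2 * B\<^sup>2) \<le> - (y / (2 * B))"
    unfolding \<theta>_eq using B by (simp add: field_simps power2_eq_square)
  then show ?thesis by simp
qed

lemma (in finite_measure) integral_le_measure_if_le_indicator:
  fixes f :: "'a \<Rightarrow> real"
  assumes E: "E \<in> sets M" and f: "\<And>x. x \<in> space M \<Longrightarrow> f x \<le> indicator E x"
  shows "(\<integral>x. f x \<partial>M) \<le> measure M E"
proof (cases "integrable M f")
  case True
  have "integrable M (indicator E :: 'a \<Rightarrow> real)"
    using E by (simp add: emeasure_finite less_top[symmetric])
  then have "(\<integral>x. f x \<partial>M) \<le> (\<integral>x. indicator E x \<partial>M)"
    using True f by (intro integral_mono) auto
  also have "\<dots> = measure M E" using E by simp
  finally show ?thesis .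
qed (simp add: not_integrable_integral_eq)

context prob_space
begin

lemma integrable_of_exp_square_le_2:
  fixes Y :: "'a \<Rightarrow> real"
  assumes [measurable]: "Y \<in> borel_measurable M" and k: "0 < k"
    and E2: "(\<integral>\<^sup>+x. ennreal (exp ((Y x)\<^sup>2 / k)) \<partial>M) \<le> 2"
  shows "integrable M (\<lambda>x. exp ((Y x)\<^sup>2 / k))" "expectation (\<lambda>x. exp ((Y x)\<^sup>2 / k)) \<le> 2"
    "integrable M (\<lambda>x. (Y x)\<^sup>2)"
proof -
  show iE: "integrable M (\<lambda>x. exp ((Y x)\<^sup>2 / k))"
    using E2 by (intro integrableI_bounded) (auto simp: le_less_trans)
  have "ennreal (expectation (\<lambda>x. exp ((Y x)\<^sup>2 / k))) = (\<integral>\<^sup>+x. ennreal (exp ((Y x)\<^sup>2 / k)) \<partial>M)"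
    by (rule nn_integral_eq_integral[OF iE, symmetric]) simp
  then show "expectation (\<lambda>x. exp ((Y x)\<^sup>2 / k)) \<le> 2"
    using E2 by (simp add: ennreal_le_iff[symmetric])
  have "integrable M (\<lambda>x. (Y x)\<^sup>2 / k)"
  proof (rule Bochner_Integration.integrable_bound[OF iE])
    show "AE x in M. norm ((Y x)\<^sup>2 / k) \<le> norm (exp ((Y x)\<^sup>2 / k))"
    proof (intro AE_I2)
      fix x
      have "(Y x)\<^sup>2 / k \<le> exp ((Y x)\<^sup>2 / k)" using exp_ge_add_one_self[of "(Y x)\<^sup>2 / k"] by linarith
      then show "norm ((Y x)\<^sup>2 / k) \<le> norm (exp ((Y x)\<^sup>2 / k))" using k by simp
    qed
  qed simp
  then have "integrable M (\<lambda>x. k * ((Y x)\<^sup>2 / k))" by (rule integrable_mult_right)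
  then show "integrable M (\<lambda>x. (Y x)\<^sup>2)" using k by simp
qed

lemma mean_le_1_if_exp_mean_le_2:
  fixes W :: "'a \<Rightarrow> real"
  assumes W0: "\<And>x. 0 \<le> W x" and iE: "integrable M (\<lambda>x. exp (W x))"
    and EE: "expectation (\<lambda>x. exp (W x)) \<le> 2" and [measurable]: "W \<in> borel_measurable M"
  shows "integrable M W" "0 \<le> expectation W" "expectation W \<le> 1"
proof -
  show iW: "integrable M W"
  proof (rule Bochner_Integration.integrable_bound[OF iE])
    show "AE x in M. norm (W x) \<le> norm (exp (W x))"
    proof (intro AE_I2)
      fix x
      have "W x \<le> exp (W x)" using exp_ge_add_one_self[of "W x"] by linarith
      then show "norm (W x) \<le> norm (exp (W x))" using W0[of x] by simp
    qed
  qed simp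
  show "0 \<le> expectation W" using W0 by (intro integral_nonneg_AE) auto
  have "expectation W \<le> expectation (\<lambda>x. exp (W x) - 1)"
  proof (rule integral_mono[OF iW])
    show "integrable M (\<lambda>x. exp (W x) - 1)" using iE by simp
    show "W x \<le> exp (W x) - 1" for x using exp_ge_add_one_self[of "W x"] by linarith
  qed
  then show "expectation W \<le> 1" using iE EE by (simp add: prob_space)
qed

text \<open>The key to Bernstein's inequality: \<open>e\<^sup>x \<le> 1 + x + x\<^sup>2 e\<^bsup>\<bar>x\<bar>\<^esup>\<close>, and the remainder is
  dominated by \<open>16 a\<^sup>2 e\<^sup>W\<close>, whose mean is at most \<open>32 a\<^sup>2\<close>.\<close>

lemma mgf_centred_le:
  fixes W :: "'a \<Rightarrow> real"
  assumes [measurable]: "W \<in> borel_measurable M" and W0: "\<And>x. 0 \<le> W x"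
    and iE: "integrable M (\<lambda>x. exp (W x))" and EE: "expectation (\<lambda>x. exp (W x)) \<le> 2"
    and a: "\<bar>a\<bar> \<le> 1/8"
  shows "(\<integral>\<^sup>+x. ennreal (exp (a * (W x - expectation W))) \<partial>M) \<le> ennreal (exp (32 * a\<^sup>2))"
proof -
  define m where "m = expectation W"
  have iW: "integrable M W" and m0: "0 \<le> m" and m1: "m \<le> 1"
    unfolding m_def using mean_le_1_if_exp_mean_le_2[OF W0 iE EE assms(1)] by auto
  define X where "X x = a * (W x - m)" for x
  have iX: "integrable M X" and EX: "expectation X = 0"
    unfolding X_def using iW by (simp_all add: m_def prob_space)
  have Rb: "(X x)\<^sup>2 * exp \<bar>X x\<bar> \<le> 16 * a\<^sup>2 * exp (W x)" for x
    unfolding X_def by (rule centred_square_exp_le[OF W0 m0 m1 a])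
  have iR: "integrable M (\<lambda>x. (X x)\<^sup>2 * exp \<bar>X x\<bar>)"
  proof (rule Bochner_Integration.integrable_bound)
    show "integrable M (\<lambda>x. 16 * a\<^sup>2 * exp (W x))" using iE by simp
    show "AE x in M. norm ((X x)\<^sup>2 * exp \<bar>X x\<bar>) \<le> norm (16 * a\<^sup>2 * exp (W x))"
      using Rb by (intro AE_I2) simp
  qed (simp add: X_def)
  have iG: "integrable M (\<lambda>x. 1 + X x + (X x)\<^sup>2 * exp \<bar>X x\<bar>)"
    using iX iR by simp
  have iexp: "integrable M (\<lambda>x. exp (X x))"
  proof (rule Bochner_Integration.integrable_bound)
    show "integrable M (\<lambda>x. 1 + \<bar>X x\<bar> + (X x)\<^sup>2 * exp \<bar>X x\<bar>)" using iX iR by simp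
    show "AE x in M. norm (exp (X x)) \<le> norm (1 + \<bar>X x\<bar> + (X x)\<^sup>2 * exp \<bar>X x\<bar>)"
    proof (intro AE_I2)
      fix x
      have "exp (X x) \<le> 1 + \<bar>X x\<bar> + (X x)\<^sup>2 * exp \<bar>X x\<bar>"
        using exp_le_quadratic_bound[of "X x"] by linarith
      moreover have "0 \<le> (X x)\<^sup>2 * exp \<bar>X x\<bar>" by simp
      ultimately show "norm (exp (X x)) \<le> norm (1 + \<bar>X x\<bar> + (X x)\<^sup>2 * exp \<bar>X x\<bar>)" by simp
    qed
  qed (simp add: X_def)
  have "expectation (\<lambda>x. exp (X x)) \<le> expectation (\<lambda>x. 1 + X x + (X x)\<^sup>2 * exp \<bar>X x\<bar>)"
    by (rule integral_mono[OF iexp iG]) (rule exp_le_quadratic_bound)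
  also have "\<dots> = 1 + expectation X + expectation (\<lambda>x. (X x)\<^sup>2 * exp \<bar>X x\<bar>)"
    using iX iR by (simp add: prob_space)
  also have "expectation (\<lambda>x. (X x)\<^sup>2 * exp \<bar>X x\<bar>) \<le> expectation (\<lambda>x. 16 * a\<^sup>2 * exp (W x))"
    by (rule integral_mono[OF iR]) (use iE Rb in auto)
  also have "\<dots> = 16 * a\<^sup>2 * expectation (\<lambda>x. exp (W x))" by simp
  also have "\<dots> \<le> 16 * a\<^sup>2 * 2" using EE by (intro mult_left_mono) auto
  finally have "expectation (\<lambda>x. exp (X x)) \<le> 1 + 32 * a\<^sup>2" using EX by simp
  also have "\<dots> \<le> exp (32 * a\<^sup>2)" using exp_ge_add_one_self[of "32 * a\<^sup>2"] by simp
  finally have bound: "expectation (\<lambda>x. exp (X x)) \<le> exp (32 * a\<^sup>2)" .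
  have "(\<integral>\<^sup>+x. ennreal (exp (a * (W x - expectation W))) \<partial>M) = (\<integral>\<^sup>+x. ennreal (exp (X x)) \<partial>M)"
    unfolding X_def m_def ..
  also have "\<dots> = ennreal (expectation (\<lambda>x. exp (X x)))"
    by (rule nn_integral_eq_integral[OF iexp]) simp
  also have "\<dots> \<le> ennreal (exp (32 * a\<^sup>2))" using bound by (rule ennreal_leI)
  finally show ?thesis .
qed

lemma mgf_centred_square_le:
  fixes Y :: "'a \<Rightarrow> real"
  assumes [measurable]: "Y \<in> borel_measurable M" and k: "0 < k"
    and E2: "(\<integral>\<^sup>+x. ennreal (exp ((Y x)\<^sup>2 / k)) \<partial>M) \<le> 2" and \<theta>: "\<bar>\<theta>\<bar> \<le> 1 / (8 * k)"
  shows "(\<integral>\<^sup>+x. ennreal (exp (\<theta> * ((Y x)\<^sup>2 - expectation (\<lambda>x. (Y x)\<^sup>2)))) \<partial>M)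
           \<le> ennreal (exp (\<theta>\<^sup>2 * (8 * k)\<^sup>2))"
proof -
  define W where "W x = (Y x)\<^sup>2 / k" for x
  have a: "\<bar>\<theta> * k\<bar> \<le> 1/8" using \<theta> k by (simp add: abs_mult field_simps)
  have EW: "expectation W = expectation (\<lambda>x. (Y x)\<^sup>2) / k" unfolding W_def by simp
  have eq: "\<theta> * ((Y x)\<^sup>2 - expectation (\<lambda>x. (Y x)\<^sup>2)) = (\<theta> * k) * (W x - expectation W)" for x
    unfolding EW unfolding W_def using k by (simp add: field_simps)
  have "(\<integral>\<^sup>+x. ennreal (exp (\<theta> * ((Y x)\<^sup>2 - expectation (\<lambda>x. (Y x)\<^sup>2)))) \<partial>M)
      = (\<integral>\<^sup>+x. ennreal (exp ((\<theta> * k) * (W x - expectation W))) \<partial>M)"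
    unfolding eq ..
  also have "\<dots> \<le> ennreal (exp (32 * (\<theta> * k)\<^sup>2))"
  proof (rule mgf_centred_le[OF _ _ _ _ a])
    show "W \<in> borel_measurable M" "0 \<le> W x" for x unfolding W_def using k by auto
    show "integrable M (\<lambda>x. exp (W x))" "expectation (\<lambda>x. exp (W x)) \<le> 2"
      unfolding W_def using integrable_of_exp_square_le_2[OF _ k E2] by auto
  qed
  also have "\<dots> \<le> ennreal (exp (\<theta>\<^sup>2 * (8 * k)\<^sup>2))"
    by (intro ennreal_leI) (simp add: power_mult_distrib)
  finally show ?thesis .
qed

lemma bernstein_upper_tail:
  fixes Z :: "nat \<Rightarrow> 'a \<Rightarrow> real"
  assumes fin: "finite I" and ind: "indep_vars (\<lambda>_. borel) Z I" and B: "0 < B" and y: "0 < y"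
    and mgf: "\<And>i \<theta>. i \<in> I \<Longrightarrow> \<bar>\<theta>\<bar> \<le> 1 / B \<Longrightarrow>
               (\<integral>\<^sup>+x. ennreal (exp (\<theta> * Z i x)) \<partial>M) \<le> ennreal (exp (\<theta>\<^sup>2 * B\<^sup>2))"
    and N: "card I \<le> N" "0 < N"
  shows "prob {x\<in>space M. y \<le> (\<Sum>i\<in>I. Z i x)} \<le> exp (- min (y\<^sup>2 / (4 * real N * B\<^sup>2)) (y / (2 * B)))"
proof -
  have [measurable]: "\<And>i. i \<in> I \<Longrightarrow> random_variable borel (Z i)"
    using ind unfolding indep_vars_def by auto
  define \<theta> where "\<theta> = min (y / (2 * real N * B\<^sup>2)) (1 / B)"
  have \<theta>: "0 < \<theta>" "\<bar>\<theta>\<bar> \<le> 1 / B" unfolding \<theta>_def using B y N by auto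
  have "ennreal (prob {x\<in>space M. y \<le> (\<Sum>i\<in>I. Z i x)})
      \<le> ennreal (exp (-\<theta> * y)) * (\<integral>\<^sup>+x. ennreal (exp (\<theta> * (\<Sum>i\<in>I. Z i x))) * indicator (space M) x \<partial>M)"
    unfolding emeasure_eq_measure[symmetric] by (rule Chernoff_ineq_nn_integral_ge[OF \<theta>(1)]) auto
  also have "(\<integral>\<^sup>+x. ennreal (exp (\<theta> * (\<Sum>i\<in>I. Z i x))) * indicator (space M) x \<partial>M)
       = (\<Prod>i\<in>I. \<integral>\<^sup>+x. ennreal (exp (\<theta> * Z i x)) \<partial>M)"
  proof -
    have "(\<integral>\<^sup>+x. ennreal (exp (\<theta> * (\<Sum>i\<in>I. Z i x))) * indicator (space M) x \<partial>M)
        = (\<integral>\<^sup>+x. (\<Prod>i\<in>I. ennreal (exp (\<theta> * Z i x))) \<partial>M)"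
      by (intro nn_integral_cong) (simp_all add: sum_distrib_left exp_sum fin prod_ennreal)
    also have "\<dots> = (\<Prod>i\<in>I. \<integral>\<^sup>+x. ennreal (exp (\<theta> * Z i x)) \<partial>M)"
      by (intro indep_vars_nn_integral fin indep_vars_compose2[OF ind]) auto
    finally show ?thesis .
  qed
  also have "ennreal (exp (-\<theta> * y)) * \<dots> \<le> ennreal (exp (-\<theta> * y)) * (\<Prod>i\<in>I. ennreal (exp (\<theta>\<^sup>2 * B\<^sup>2)))"
    by (intro mult_left_mono prod_mono_ennreal mgf \<theta>) auto
  also have "\<dots> = ennreal (exp (-\<theta> * y) * exp (\<theta>\<^sup>2 * B\<^sup>2) ^ card I)"
    by (simp add: prod_ennreal ennreal_mult ennreal_power)
  also have "exp (-\<theta> * y) * exp (\<theta>\<^sup>2 * B\<^sup>2) ^ card I = exp (-\<theta> * y + card I * (\<theta>\<^sup>2 * B\<^sup>2))"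
    by (simp only: exp_add exp_of_nat_mult)
  also have "\<dots> \<le> exp (-\<theta> * y + N * (\<theta>\<^sup>2 * B\<^sup>2))"
    using N by (intro exp_mono add_left_mono mult_right_mono) auto
  also have "-\<theta> * y + N * (\<theta>\<^sup>2 * B\<^sup>2) \<le> - min (y\<^sup>2 / (4 * real N * B\<^sup>2)) (y / (2 * B))"
    unfolding \<theta>_def by (rule chernoff_exponent_le[OF B N(2)])
  finally have "ennreal (prob {x\<in>space M. y \<le> (\<Sum>i\<in>I. Z i x)})
      \<le> ennreal (exp (- min (y\<^sup>2 / (4 * real N * B\<^sup>2)) (y / (2 * B))))"
    using ennreal_leI by blast
  then show ?thesis by (subst (asm) ennreal_le_iff) auto
qed

lemma bernstein_two_sided:
  fixes Z :: "nat \<Rightarrow> 'a \<Rightarrow> real"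
  assumes fin: "finite I" and ind: "indep_vars (\<lambda>_. borel) Z I" and B: "0 < B" and y: "0 < y"
    and mgf: "\<And>i \<theta>. i \<in> I \<Longrightarrow> \<bar>\<theta>\<bar> \<le> 1 / B \<Longrightarrow>
               (\<integral>\<^sup>+x. ennreal (exp (\<theta> * Z i x)) \<partial>M) \<le> ennreal (exp (\<theta>\<^sup>2 * B\<^sup>2))"
    and N: "card I \<le> N" "0 < N"
  shows "prob {x\<in>space M. y \<le> \<bar>\<Sum>i\<in>I. Z i x\<bar>} \<le> 2 * exp (- min (y\<^sup>2 / (4 * real N * B\<^sup>2)) (y / (2 * B)))"
proof -
  have [measurable]: "\<And>i. i \<in> I \<Longrightarrow> random_variable borel (Z i)"
    using ind unfolding indep_vars_def by auto
  have ind': "indep_vars (\<lambda>_. borel) (\<lambda>i x. - Z i x) I"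
    by (rule indep_vars_compose2[OF ind]) auto
  have mgf': "(\<integral>\<^sup>+x. ennreal (exp (\<theta> * - Z i x)) \<partial>M) \<le> ennreal (exp (\<theta>\<^sup>2 * B\<^sup>2))"
    if "i \<in> I" "\<bar>\<theta>\<bar> \<le> 1 / B" for i \<theta>
    using mgf[of i "-\<theta>"] that by simp
  have "{x\<in>space M. y \<le> \<bar>\<Sum>i\<in>I. Z i x\<bar>} =
        {x\<in>space M. y \<le> (\<Sum>i\<in>I. Z i x)} \<union> {x\<in>space M. y \<le> (\<Sum>i\<in>I. - Z i x)}"
    by (auto simp: sum_negf)
  then have "prob {x\<in>space M. y \<le> \<bar>\<Sum>i\<in>I. Z i x\<bar>} \<le>
         prob {x\<in>space M. y \<le> (\<Sum>i\<in>I. Z i x)} + prob {x\<in>space M. y \<le> (\<Sum>i\<in>I. - Z i x)}"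
    by (simp add: measure_Un_le)
  also have "\<dots> \<le> 2 * exp (- min (y\<^sup>2 / (4 * real N * B\<^sup>2)) (y / (2 * B)))"
    using bernstein_upper_tail[OF fin ind B y mgf N] bernstein_upper_tail[OF fin ind' B y mgf' N]
    by simp
  finally show ?thesis .
qed

end

section \<open>Projections of the sample and their concentration\<close>

definition proj :: "nat \<Rightarrow> (nat \<Rightarrow> real) \<Rightarrow> nat \<Rightarrow> data \<Rightarrow> real" where
  "proj p w i x = (\<Sum>j<p. w j * x i j)"

text \<open>\<open>proj_stat p n t w x = w\<^sup>T (\<Sigma>1hat\<^sub>t - \<Sigma>2hat\<^sub>t) w\<close>; \<open>proj_stat_mean\<close> is its mean, written as a
  sum of means so that no integrability of the statistic itself is needed.\<close>

definition proj_stat :: "nat \<Rightarrow> nat \<Rightarrow> nat \<Rightarrow> (nat \<Rightarrow> real) \<Rightarrow> data \<Rightarrow> real" where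
  "proj_stat p n t w x =
     ((\<Sum>i=1..t. (proj p w i x)\<^sup>2) - (\<Sum>i=1..t. (proj p w (n - i + 1) x)\<^sup>2)) / t"

definition proj_stat_mean :: "nat \<Rightarrow> nat \<Rightarrow> data measure \<Rightarrow> nat \<Rightarrow> (nat \<Rightarrow> real) \<Rightarrow> real" where
  "proj_stat_mean p n P t w =
     ((\<Sum>i=1..t. (\<integral>x. (proj p w i x)\<^sup>2 \<partial>P)) - (\<Sum>i=1..t. (\<integral>x. (proj p w (n - i + 1) x)\<^sup>2 \<partial>P))) / t"

definition deviation_event ::
    "nat \<Rightarrow> nat \<Rightarrow> data measure \<Rightarrow> nat \<Rightarrow> (nat \<Rightarrow> real) \<Rightarrow> real \<Rightarrow> data set" where
  "deviation_event p n P t w y =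
     {x\<in>space P. y \<le> \<bar>proj_stat p n t w x - proj_stat_mean p n P t w\<bar>}"

lemma quadf_gram:
  "quadf p (\<lambda>j k. (\<Sum>i\<in>I. f i j * f i k) / t) w = (\<Sum>i\<in>I. (\<Sum>j<p. w j * f i j)\<^sup>2) / t"
proof -
  have "quadf p (\<lambda>j k. (\<Sum>i\<in>I. f i j * f i k) / t) w
      = (\<Sum>i\<in>I. \<Sum>j<p. \<Sum>k<p. (w j * f i j) * (w k * f i k) / t)"
    unfolding quadf_def
    by (simp add: sum_distrib_left sum_distrib_right sum_divide_distrib mult_ac sum.swap[of _ I])
  also have "\<dots> = (\<Sum>i\<in>I. (\<Sum>j<p. w j * f i j)\<^sup>2) / t"
    by (simp add: power2_eq_square sum_product sum_divide_distrib)
  finally show ?thesis .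
qed

lemma quadf_stat_diff_eq_proj_stat:
  "quadf p (\<lambda>j k. Sig1hat t x j k - Sig2hat n t x j k) w = proj_stat p n t w x"
proof -
  have "quadf p (\<lambda>j k. Sig1hat t x j k - Sig2hat n t x j k) w =
        quadf p (Sig1hat t x) w - quadf p (Sig2hat n t x) w"
    unfolding quadf_def by (simp add: sum_subtractf algebra_simps)
  also have "quadf p (Sig1hat t x) w = (\<Sum>i=1..t. (proj p w i x)\<^sup>2) / t"
    unfolding Sig1hat_def proj_def by (rule quadf_gram)
  also have "quadf p (Sig2hat n t x) w = (\<Sum>i=1..t. (proj p w (n - i + 1) x)\<^sup>2) / t"
    unfolding Sig2hat_def proj_def by (rule quadf_gram)
  finally show ?thesis unfolding proj_stat_def by (simp add: diff_divide_distrib)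
qed

lemma symm_stat_diff: "symm p (\<lambda>j k. Sig1hat t x j k - Sig2hat n t x j k)"
  unfolding symm_def Sig1hat_def Sig2hat_def by (simp add: mult.commute)

lemma sum_reflect:
  fixes g :: "nat \<Rightarrow> 'a::comm_monoid_add"
  assumes "t \<le> n"
  shows "(\<Sum>i=1..t. g (n - i + 1)) = (\<Sum>i\<in>{n-t+1..n}. g i)"
proof (rule sum.reindex_bij_witness[of _ "\<lambda>i. n - i + 1" "\<lambda>i. n - i + 1"])
  fix a assume "a \<in> {1..t}"
  then show "n - (n - a + 1) + 1 = a" "n - a + 1 \<in> {n - t + 1..n}" using assms by auto
next
  fix b assume "b \<in> {n - t + 1..n}"
  then show "n - (n - b + 1) + 1 = b" "n - b + 1 \<in> {1..t}" using assms by auto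
qed simp

lemma signed_block_sum:
  fixes f :: "nat \<Rightarrow> real"
  assumes "2 * t \<le> n"
  shows "(\<Sum>i\<in>{1..t} \<union> {n-t+1..n}. if i \<le> t then f i else - f i)
           = (\<Sum>i=1..t. f i) - (\<Sum>i=1..t. f (n - i + 1))"
proof -
  have "(\<Sum>i\<in>{1..t} \<union> {n-t+1..n}. if i \<le> t then f i else - f i)
      = (\<Sum>i=1..t. if i \<le> t then f i else - f i) + (\<Sum>i\<in>{n-t+1..n}. if i \<le> t then f i else - f i)"
    using assms by (intro sum.union_disjoint) auto
  also have "(\<Sum>i=1..t. if i \<le> t then f i else - f i) = (\<Sum>i=1..t. f i)"
    by (intro sum.cong) auto
  also have "(\<Sum>i\<in>{n-t+1..n}. if i \<le> t then f i else - f i) = (\<Sum>i\<in>{n-t+1..n}. - f i)"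
    using assms by (intro sum.cong) auto
  also have "\<dots> = - (\<Sum>i=1..t. f (n - i + 1))"
    using sum_reflect[of t n f] assms by (simp add: sum_negf)
  finally show ?thesis by simp
qed

lemma proj_stat_centred_eq_signed_sum:
  assumes t: "1 \<le> t" "2 * t \<le> n"
  shows "t * (proj_stat p n t w x - proj_stat_mean p n P t w)
    = (\<Sum>i\<in>{1..t} \<union> {n-t+1..n}.
         (if i \<le> t then 1 else -1) * ((proj p w i x)\<^sup>2 - (\<integral>x. (proj p w i x)\<^sup>2 \<partial>P)))"
    (is "_ = (\<Sum>i\<in>_. _ * (?f i))")
proof -
  have "(\<Sum>i\<in>{1..t} \<union> {n-t+1..n}. (if i \<le> t then 1 else -1) * ?f i)
      = (\<Sum>i\<in>{1..t} \<union> {n-t+1..n}. if i \<le> t then ?f i else - ?f i)"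
    by (intro sum.cong) auto
  also have "\<dots> = (\<Sum>i=1..t. ?f i) - (\<Sum>i=1..t. ?f (n - i + 1))"
    by (rule signed_block_sum[OF t(2)])
  also have "\<dots> = ((\<Sum>i=1..t. (proj p w i x)\<^sup>2) - (\<Sum>i=1..t. (proj p w (n - i + 1) x)\<^sup>2))
      - ((\<Sum>i=1..t. (\<integral>x. (proj p w i x)\<^sup>2 \<partial>P)) - (\<Sum>i=1..t. (\<integral>x. (proj p w (n - i + 1) x)\<^sup>2 \<partial>P)))"
    by (simp add: sum_subtractf)
  also have "\<dots> = t * (proj_stat p n t w x - proj_stat_mean p n P t w)"
  proof -
    have eq: "a - b = real t * (a / t - b / t)" for a b :: real using t by (simp add: field_simps)
    show ?thesis unfolding proj_stat_def proj_stat_mean_def by (rule eq)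
  qed
  finally show ?thesis by (rule sym)
qed

lemma measurable_row:
  assumes "sets P = sets (borel :: data measure)"
  shows "(\<lambda>x::data. x i) \<in> measurable P borel"
proof -
  have "(\<lambda>x::data. x i) \<in> measurable borel borel"
    by (intro borel_measurable_continuous_onI continuous_on_product_coordinates)
  moreover have "measurable P (borel :: (nat \<Rightarrow> real) measure) = measurable borel borel"
    by (rule measurable_cong_sets[OF assms refl])
  ultimately show ?thesis by simp
qed

lemma borel_measurable_linear_form: "(\<lambda>v::nat \<Rightarrow> real. \<Sum>j<p. w j * v j) \<in> borel_measurable borel"
proof -
  have "(\<lambda>v::nat \<Rightarrow> real. v j) \<in> borel_measurable borel" for j
    by (intro borel_measurable_continuous_onI continuous_on_product_coordinates)
  then show ?thesis by (intro borel_measurable_sum borel_measurable_times borel_measurable_const) auto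
qed

lemma measurable_proj:
  assumes "sets P = sets (borel :: data measure)"
  shows "proj p w i \<in> borel_measurable P"
  using measurable_compose[OF measurable_row[OF assms] borel_measurable_linear_form]
  by (simp add: proj_def[abs_def])

lemma square_integrable_mult:
  fixes f g :: "'a \<Rightarrow> real"
  assumes "integrable M (\<lambda>x. (f x)\<^sup>2)" "integrable M (\<lambda>x. (g x)\<^sup>2)"
    "f \<in> borel_measurable M" "g \<in> borel_measurable M"
  shows "integrable M (\<lambda>x. f x * g x)"
proof (rule Bochner_Integration.integrable_bound)
  show "integrable M (\<lambda>x. (f x)\<^sup>2 + (g x)\<^sup>2)" using assms by simp
  show "AE x in M. norm (f x * g x) \<le> norm ((f x)\<^sup>2 + (g x)\<^sup>2)"
  proof (intro AE_I2)
    fix x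
    have "2 * \<bar>f x * g x\<bar> \<le> (f x)\<^sup>2 + (g x)\<^sup>2"
      using sum_squares_bound[of "\<bar>f x\<bar>" "\<bar>g x\<bar>"] by (simp add: abs_mult power2_abs)
    then show "norm (f x * g x) \<le> norm ((f x)\<^sup>2 + (g x)\<^sup>2)" by simp
  qed
qed (use assms in simp)

lemma psi2_nn_integral_le:
  assumes "(psi2 M Y)\<^sup>2 < ennreal k"
  shows "(\<integral>\<^sup>+x. ennreal (exp ((Y x)\<^sup>2 / k)) \<partial>M) \<le> 2"
proof -
  have k: "0 < k"
  proof (rule ccontr)
    assume "\<not> 0 < k"
    then have "ennreal k = 0" by (simp add: ennreal_eq_0_iff)
    then show False using assms by simp
  qed
  have "psi2 M Y < ennreal (sqrt k)"
  proof (rule ccontr)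
    assume "\<not> psi2 M Y < ennreal (sqrt k)"
    then have "(ennreal (sqrt k))\<^sup>2 \<le> (psi2 M Y)\<^sup>2" by (intro power_mono) auto
    also have "(ennreal (sqrt k))\<^sup>2 = ennreal k" using k by (simp add: ennreal_power)
    finally show False using assms by simp
  qed
  then obtain e where "e \<in> {ennreal t | t. 0 < t \<and> (\<integral>\<^sup>+x. ennreal (exp ((Y x)\<^sup>2 / t\<^sup>2)) \<partial>M) \<le> 2}"
    and "e < ennreal (sqrt k)"
    unfolding psi2_def by (auto simp: Inf_less_iff)
  then obtain t where t: "0 < t" "t < sqrt k" and int: "(\<integral>\<^sup>+x. ennreal (exp ((Y x)\<^sup>2 / t\<^sup>2)) \<partial>M) \<le> 2"
    by (auto simp: ennreal_less_iff)
  have "t\<^sup>2 < (sqrt k)\<^sup>2" using t by (intro power_strict_mono) auto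
  then have tk: "t\<^sup>2 < k" using k by simp
  have "(\<integral>\<^sup>+x. ennreal (exp ((Y x)\<^sup>2 / k)) \<partial>M) \<le> (\<integral>\<^sup>+x. ennreal (exp ((Y x)\<^sup>2 / t\<^sup>2)) \<partial>M)"
    using t tk k by (intro nn_integral_mono ennreal_leI exp_mono divide_left_mono) auto
  also note int
  finally show ?thesis .
qed

text \<open>The hypotheses shared by the null and the alternative distributions.\<close>

locale cov_bounded_sample =
  fixes p n :: nat and u \<sigma> :: real and P :: "data measure"
  assumes class_Pu: "class_Pu p n u P" and u_pos: "0 < u" and \<sigma>_pos: "0 < \<sigma>"
    and op_norm_cov_le: "\<And>i. i \<in> {1..n} \<Longrightarrow> op_norm p (cov P i) \<le> \<sigma>\<^sup>2"
begin

sublocale prob_space P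
  using class_Pu unfolding class_Pu_def is_data_dist_def by auto

lemma sets_P: "sets P = sets borel"
  using class_Pu unfolding class_Pu_def is_data_dist_def by auto

lemma proj_exp_square_le_2:
  assumes i: "i \<in> {1..n}" and w: "sqnorm p w \<le> 1"
  shows "(\<integral>\<^sup>+x. ennreal (exp ((proj p w i x)\<^sup>2 / (2 * u * \<sigma>\<^sup>2))) \<partial>P) \<le> 2"
proof (cases "sqnorm p w = 0")
  case True
  then have "proj p w i x = 0" for x
    unfolding proj_def using sqnorm_eq_0D[OF True] by (intro sum.neutral) auto
  then show ?thesis by (simp add: emeasure_space_1)
next
  case False
  define c where "c = sqrt (sqnorm p w)"
  have c: "0 < c" "c \<le> 1" unfolding c_def using False sqnorm_nonneg[of p w] w by auto
  define v where "v j = (if j < p then w j / c else 0)" for j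
  have "sqnorm p v = sqnorm p (\<lambda>j. (1 / c) * w j)"
    unfolding sqnorm_def v_def by (intro sum.cong) auto
  also have "\<dots> = 1"
    unfolding sqnorm_scale c_def using False sqnorm_nonneg[of p w] by (simp add: power_divide)
  finally have v: "v \<in> sphere_p p" unfolding sphere_p_iff v_def by auto
  have proj_w: "proj p w i x = c * proj p v i x" for x
    unfolding proj_def v_def using c by (simp add: sum_distrib_left)
  have "psi2 P (proj p v i) \<le> psi2_vec p P (\<lambda>x. x i)"
    unfolding psi2_vec_def by (intro SUP_upper2[OF v]) (simp add: proj_def[abs_def])
  then have "(psi2 P (proj p v i))\<^sup>2 \<le> (psi2_vec p P (\<lambda>x. x i))\<^sup>2" by (intro power_mono) auto
  also have "\<dots> \<le> ennreal (u * op_norm p (cov P i))" using class_Pu i unfolding class_Pu_def by auto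
  also have "\<dots> \<le> ennreal (u * \<sigma>\<^sup>2)"
    using op_norm_cov_le[OF i] u_pos by (intro ennreal_leI mult_left_mono) auto
  also have "\<dots> < ennreal (2 * u * \<sigma>\<^sup>2)" using u_pos \<sigma>_pos by (subst ennreal_less_iff) auto
  finally have E: "(\<integral>\<^sup>+x. ennreal (exp ((proj p v i x)\<^sup>2 / (2 * u * \<sigma>\<^sup>2))) \<partial>P) \<le> 2"
    by (rule psi2_nn_integral_le)
  have "(\<integral>\<^sup>+x. ennreal (exp ((proj p w i x)\<^sup>2 / (2 * u * \<sigma>\<^sup>2))) \<partial>P)
      \<le> (\<integral>\<^sup>+x. ennreal (exp ((proj p v i x)\<^sup>2 / (2 * u * \<sigma>\<^sup>2))) \<partial>P)"
  proof (intro nn_integral_mono ennreal_leI exp_mono divide_right_mono)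
    fix x
    have "(proj p w i x)\<^sup>2 = c\<^sup>2 * (proj p v i x)\<^sup>2" unfolding proj_w by (simp add: power_mult_distrib)
    also have "\<dots> \<le> 1 * (proj p v i x)\<^sup>2" using c by (intro mult_right_mono) (auto simp: power_le_one)
    finally show "(proj p w i x)\<^sup>2 \<le> (proj p v i x)\<^sup>2" by simp
  qed (use u_pos in simp)
  also note E
  finally show ?thesis .
qed

lemma integrable_entry_square:
  assumes i: "i \<in> {1..n}" and j: "j < p"
  shows "integrable P (\<lambda>x. (x i j)\<^sup>2)"
proof -
  define e where "e l = (if l = j then 1 else (0::real))" for l
  have "(\<Sum>l<p. (e l)\<^sup>2) = (\<Sum>l<p. if l = j then 1 else 0)" unfolding e_def by (intro sum.cong) auto
  then have e: "sqnorm p e \<le> 1" unfolding sqnorm_def using j by simp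
  have "proj p e i x = (\<Sum>l<p. if l = j then x i l else 0)" for x
    unfolding proj_def e_def by (intro sum.cong) auto
  then have proj_e: "proj p e i x = x i j" for x using j by simp
  have "integrable P (\<lambda>x. (proj p e i x)\<^sup>2)"
    using u_pos \<sigma>_pos
    by (intro integrable_of_exp_square_le_2(3)[OF measurable_proj[OF sets_P] _ proj_exp_square_le_2[OF i e]])
      simp
  then show ?thesis unfolding proj_e .
qed

lemma expectation_proj_square:
  assumes i: "i \<in> {1..n}"
  shows "(\<integral>x. (proj p w i x)\<^sup>2 \<partial>P) = quadf p (cov P i) w"
proof -
  have entry: "(\<lambda>x. x i j) \<in> borel_measurable P" for j
    using measurable_compose[OF measurable_row[OF sets_P]
        borel_measurable_continuous_onI[OF continuous_on_product_coordinates]] by simp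
  have int: "integrable P (\<lambda>x. x i j * x i l)" if "j < p" "l < p" for j l
    using that by (intro square_integrable_mult integrable_entry_square[OF i] entry)
  have "(\<integral>x. (proj p w i x)\<^sup>2 \<partial>P) = (\<integral>x. (\<Sum>j<p. \<Sum>l<p. (w j * w l) * (x i j * x i l)) \<partial>P)"
    unfolding proj_def by (simp add: power2_eq_square sum_product mult_ac)
  also have "\<dots> = (\<Sum>j<p. (\<integral>x. (\<Sum>l<p. (w j * w l) * (x i j * x i l)) \<partial>P))"
    by (rule Bochner_Integration.integral_sum) (use int in auto)
  also have "\<dots> = (\<Sum>j<p. \<Sum>l<p. (\<integral>x. (w j * w l) * (x i j * x i l) \<partial>P))"
    by (intro sum.cong refl Bochner_Integration.integral_sum) (use int in auto)
  also have "\<dots> = (\<Sum>j<p. \<Sum>l<p. (w j * w l) * (\<integral>x. x i j * x i l \<partial>P))"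
    by simp
  also have "\<dots> = quadf p (cov P i) w"
    unfolding quadf_def cov_def by (simp add: mult_ac)
  finally show ?thesis .
qed

lemma proj_stat_mean_eq:
  assumes t: "1 \<le> t" "2 * t \<le> n"
    and cov1: "\<And>i. i \<in> {1..t} \<Longrightarrow> mat_eq p (cov P i) \<Sigma>1"
    and cov2: "\<And>i. i \<in> {1..t} \<Longrightarrow> mat_eq p (cov P (n - i + 1)) \<Sigma>2"
  shows "proj_stat_mean p n P t w = quadf p \<Sigma>1 w - quadf p \<Sigma>2 w"
proof -
  have "(\<Sum>i=1..t. (\<integral>x. (proj p w i x)\<^sup>2 \<partial>P)) = (\<Sum>i=1..t. quadf p \<Sigma>1 w)"
    using t by (intro sum.cong refl) (simp add: expectation_proj_square quadf_cong[OF cov1])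
  moreover have "(\<Sum>i=1..t. (\<integral>x. (proj p w (n - i + 1) x)\<^sup>2 \<partial>P)) = (\<Sum>i=1..t. quadf p \<Sigma>2 w)"
  proof (intro sum.cong refl)
    fix i assume i: "i \<in> {1..t}"
    then have "n - i + 1 \<in> {1..n}" using t by auto
    then show "(\<integral>x. (proj p w (n - i + 1) x)\<^sup>2 \<partial>P) = quadf p \<Sigma>2 w"
      by (simp only: expectation_proj_square quadf_cong[OF cov2[OF i]])
  qed
  ultimately show ?thesis
    unfolding proj_stat_mean_def using t by (simp add: right_diff_distrib[symmetric])
qed

lemma proj_square_mgf_le:
  assumes i: "i \<in> {1..n}" and w: "sqnorm p w \<le> 1" and \<theta>: "\<bar>\<theta>\<bar> \<le> 1 / (16 * u * \<sigma>\<^sup>2)"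
  shows "(\<integral>\<^sup>+x. ennreal (exp (\<theta> * ((proj p w i x)\<^sup>2 - (\<integral>x. (proj p w i x)\<^sup>2 \<partial>P)))) \<partial>P)
           \<le> ennreal (exp (\<theta>\<^sup>2 * (16 * u * \<sigma>\<^sup>2)\<^sup>2))"
proof -
  have "(\<integral>\<^sup>+x. ennreal (exp (\<theta> * ((proj p w i x)\<^sup>2 - (\<integral>x. (proj p w i x)\<^sup>2 \<partial>P)))) \<partial>P)
      \<le> ennreal (exp (\<theta>\<^sup>2 * (8 * (2 * u * \<sigma>\<^sup>2))\<^sup>2))"
  proof (rule mgf_centred_square_le[OF measurable_proj[OF sets_P] _ proj_exp_square_le_2[OF i w]])
    show "0 < 2 * u * \<sigma>\<^sup>2" using u_pos \<sigma>_pos by simp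
    show "\<bar>\<theta>\<bar> \<le> 1 / (8 * (2 * u * \<sigma>\<^sup>2))" using \<theta> by (simp add: mult.assoc)
  qed
  then show ?thesis by (simp add: mult.assoc)
qed

lemma deviation_event_prob_le:
  assumes t: "1 \<le> t" "2 * t \<le> n" and w: "sqnorm p w \<le> 1" and y: "0 < y"
  shows "prob (deviation_event p n P t w y)
           \<le> 2 * exp (- min (t * y\<^sup>2 / (8 * (16 * u * \<sigma>\<^sup>2)\<^sup>2)) (t * y / (2 * (16 * u * \<sigma>\<^sup>2))))"
proof -
  define B where "B = 16 * u * \<sigma>\<^sup>2"
  have B: "0 < B" unfolding B_def using u_pos \<sigma>_pos by simp
  define \<mu> where "\<mu> i = (\<integral>x. (proj p w i x)\<^sup>2 \<partial>P)" for i
  define \<epsilon> where "\<epsilon> i = (if i \<le> t then 1 else (-1::real))" for i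
  define Z where "Z i x = \<epsilon> i * ((proj p w i x)\<^sup>2 - \<mu> i)" for i x
  define I where "I = {1..t} \<union> {n-t+1..n}"
  have "{1..t} \<inter> {n-t+1..n} = {}" using t by auto
  then have I: "finite I" "I \<subseteq> {1..n}" "card I = 2 * t"
    unfolding I_def using t by (auto simp: card_Un_disjoint)
  have sumZ: "(\<Sum>i\<in>I. Z i x) = t * (proj_stat p n t w x - proj_stat_mean p n P t w)" for x
    unfolding proj_stat_centred_eq_signed_sum[OF t] Z_def \<epsilon>_def \<mu>_def I_def by (rule refl)
  have event: "deviation_event p n P t w y = {x\<in>space P. t * y \<le> \<bar>\<Sum>i\<in>I. Z i x\<bar>}"
  proof -
    have "0 < real t" using t by simp
    then have "y \<le> \<bar>proj_stat p n t w x - proj_stat_mean p n P t w\<bar> \<longleftrightarrow> t * y \<le> \<bar>\<Sum>i\<in>I. Z i x\<bar>"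
      for x unfolding sumZ abs_mult by simp
    then show ?thesis unfolding deviation_event_def by simp
  qed
  have rows: "indep_vars (\<lambda>_. borel) (\<lambda>i x. x i) {1..n}"
    using class_Pu unfolding class_Pu_def by simp
  have "indep_vars (\<lambda>_. borel) (\<lambda>i x. (\<lambda>v. \<epsilon> i * ((\<Sum>j<p. w j * v j)\<^sup>2 - \<mu> i)) (x i)) {1..n}"
    by (rule indep_vars_compose2[OF rows]) (use borel_measurable_linear_form in simp)
  then have "indep_vars (\<lambda>_. borel) Z {1..n}" unfolding Z_def proj_def by simp
  then have ind: "indep_vars (\<lambda>_. borel) Z I" by (rule indep_vars_subset[OF _ I(2)])
  have mgf: "(\<integral>\<^sup>+x. ennreal (exp (\<theta> * Z i x)) \<partial>P) \<le> ennreal (exp (\<theta>\<^sup>2 * B\<^sup>2))"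
    if "i \<in> I" "\<bar>\<theta>\<bar> \<le> 1 / B" for i \<theta>
  proof -
    have "(\<integral>\<^sup>+x. ennreal (exp (\<theta> * Z i x)) \<partial>P)
        = (\<integral>\<^sup>+x. ennreal (exp ((\<epsilon> i * \<theta>) * ((proj p w i x)\<^sup>2 - \<mu> i))) \<partial>P)"
      unfolding Z_def by (simp add: mult_ac)
    also have "\<dots> \<le> ennreal (exp ((\<epsilon> i * \<theta>)\<^sup>2 * B\<^sup>2))"
      unfolding \<mu>_def B_def using that I(2)
      by (intro proj_square_mgf_le w) (auto simp: \<epsilon>_def B_def)
    also have "(\<epsilon> i * \<theta>)\<^sup>2 = \<theta>\<^sup>2" unfolding \<epsilon>_def by (simp add: power_mult_distrib)
    finally show ?thesis .
  qed
  have "prob (deviation_event p n P t w y)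
      \<le> 2 * exp (- min ((t * y)\<^sup>2 / (4 * real (2 * t) * B\<^sup>2)) (t * y / (2 * B)))"
    unfolding event
  proof (rule bernstein_two_sided[OF I(1) ind B _ mgf])
    show "0 < real t * y" using t y by simp
  qed (use I t in auto)
  also have "(t * y)\<^sup>2 / (4 * real (2 * t) * B\<^sup>2) = t * y\<^sup>2 / (8 * B\<^sup>2)"
    using t by (simp add: power2_eq_square)
  finally show ?thesis unfolding B_def .
qed

lemma deviation_event_in_events: "deviation_event p n P t w y \<in> events"
proof -
  have [measurable]: "proj p w i \<in> borel_measurable P" for i by (rule measurable_proj[OF sets_P])
  have [measurable]: "proj_stat p n t w \<in> borel_measurable P" unfolding proj_stat_def by measurable
  show ?thesis unfolding deviation_event_def by measurable
qed

end

lemma bernstein_exponent_ge: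
  fixes u \<sigma> A lam t g r :: real
  assumes u: "0 < u" and \<sigma>: "0 < \<sigma>" and A: "1 \<le> A" and lam: "128 * u * A \<le> lam"
    and g: "0 < g" and r1: "g \<le> t * r" and r2: "g \<le> t * r\<^sup>2"
  shows "A * g \<le> min (t * (lam * \<sigma>\<^sup>2 * r / 2)\<^sup>2 / (8 * (16 * u * \<sigma>\<^sup>2)\<^sup>2))
                     (t * (lam * \<sigma>\<^sup>2 * r / 2) / (2 * (16 * u * \<sigma>\<^sup>2)))"
proof -
  have lam0: "0 < 128 * u * A" using u A by simp
  then have lam_pos: "0 \<le> lam" using lam by linarith
  have e1: "t * (lam * \<sigma>\<^sup>2 * r / 2)\<^sup>2 / (8 * (16 * u * \<sigma>\<^sup>2)\<^sup>2) = lam\<^sup>2 * (t * r\<^sup>2) / (8192 * u\<^sup>2)"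
    using u \<sigma> by (simp add: power_mult_distrib power_divide field_simps)
  have e2: "t * (lam * \<sigma>\<^sup>2 * r / 2) / (2 * (16 * u * \<sigma>\<^sup>2)) = lam * (t * r) / (64 * u)"
    using u \<sigma> by (simp add: field_simps)
  have "A * g \<le> 2 * A\<^sup>2 * g" using A g by (simp add: power2_eq_square mult_right_mono)
  also have "2 * A\<^sup>2 * g = (128 * u * A)\<^sup>2 * g / (8192 * u\<^sup>2)" using u by (simp add: power_mult_distrib)
  also have "\<dots> \<le> lam\<^sup>2 * (t * r\<^sup>2) / (8192 * u\<^sup>2)"
    using power_mono[OF lam, of 2] lam0 r2 g by (intro divide_right_mono mult_mono) auto
  finally have "A * g \<le> lam\<^sup>2 * (t * r\<^sup>2) / (8192 * u\<^sup>2)" .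
  moreover have "A * g \<le> lam * (t * r) / (64 * u)"
  proof -
    have "A * g \<le> 2 * A * g" using A g by simp
    also have "2 * A * g = (128 * u * A) * g / (64 * u)" using u by simp
    also have "\<dots> \<le> lam * (t * r) / (64 * u)"
      using mult_mono[OF lam r1 lam_pos] g u by (intro divide_right_mono) auto
    finally show ?thesis .
  qed
  ultimately show ?thesis unfolding e1 e2 by simp
qed

lemma (in cov_bounded_sample) deviation_at_threshold_le:
  assumes A: "1 \<le> A" and lam: "128 * u * A \<le> lam" and s: "1 \<le> s" "s \<le> p"
    and n: "2 \<le> n" and t: "t \<in> Tset n" and w: "sqnorm p w \<le> 1"
  shows "prob (deviation_event p n P t w (lam * \<sigma>\<^sup>2 * rate p n s t / 2)) \<le> 2 * exp (- (A * gam p n s))"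
proof -
  have t1: "1 \<le> t" "2 * t \<le> n" using Tset_memD[OF n t] by auto
  have g: "0 < gam p n s" using gam_ge_1[OF s, of n] by simp
  note r = rate_bounds[OF g t1(1)]
  have "0 < 128 * u * A" using A u_pos by simp
  then have "0 < lam" using lam by linarith
  then have y: "0 < lam * \<sigma>\<^sup>2 * rate p n s t / 2" using \<sigma>_pos r(3) by simp
  have "prob (deviation_event p n P t w (lam * \<sigma>\<^sup>2 * rate p n s t / 2))
      \<le> 2 * exp (- min (t * (lam * \<sigma>\<^sup>2 * rate p n s t / 2)\<^sup>2 / (8 * (16 * u * \<sigma>\<^sup>2)\<^sup>2))
                        (t * (lam * \<sigma>\<^sup>2 * rate p n s t / 2) / (2 * (16 * u * \<sigma>\<^sup>2))))"
    by (rule deviation_event_prob_le[OF t1 w y])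
  also have "\<dots> \<le> 2 * exp (- (A * gam p n s))"
    using bernstein_exponent_ge[OF u_pos \<sigma>_pos A lam g r(1,2)] by simp
  finally show ?thesis .
qed

section \<open>The two error probabilities\<close>

lemma exp_neg_ln_mult_le:
  fixes \<delta> g :: real
  assumes "0 < \<delta>" "\<delta> \<le> 8" "1 \<le> g"
  shows "exp (- (ln (8 / \<delta>) * g)) \<le> \<delta> / 8"
proof -
  have "0 \<le> ln (8 / \<delta>)" using assms by simp
  then have "ln (8 / \<delta>) * 1 \<le> ln (8 / \<delta>) * g" using assms(3) by (intro mult_left_mono)
  then have "exp (- (ln (8 / \<delta>) * g)) \<le> exp (- ln (8 / \<delta>))" by simp
  also have "\<dots> = \<delta> / 8" using assms by (simp add: exp_minus)
  finally show ?thesis .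
qed

text \<open>The \<open>33\<close> in the exponent pays for the union bound: at most \<open>2 exp \<gamma>\<close> scales and at most
  \<open>exp (32 \<gamma>)\<close> net points.\<close>

lemma union_bound_le:
  assumes \<delta>: "0 < \<delta>" "\<delta> \<le> 8" and n: "2 \<le> n" and s: "1 \<le> s" "s \<le> p"
  shows "real (card (Tset n)) * real (card (lattice_net p s))
           * (2 * exp (- ((33 + ln (8 / \<delta>)) * gam p n s))) \<le> \<delta> / 2"
proof -
  define g where "g = gam p n s"
  have T: "real (card (Tset n)) \<le> 2 * exp g"
    using card_Tset_le[OF n] ln_le_exp_gam[OF n, of p s] unfolding g_def by linarith
  have "real (card (lattice_net p s)) \<le> (exp 1 * p / s) ^ (32 * s)"
    by (rule card_lattice_net_le[OF s])
  also have "\<dots> = exp (real (32 * s) * ln (exp 1 * p / s))"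
  proof -
    have "0 < exp 1 * real p / real s" using s by simp
    then show ?thesis by (simp only: exp_of_nat_mult exp_ln)
  qed
  also have "\<dots> \<le> exp (32 * g)"
  proof -
    have "real s * ln (exp 1 * p / s) \<le> g" unfolding g_def gam_def by simp
    then show ?thesis by simp
  qed
  finally have N: "real (card (lattice_net p s)) \<le> exp (32 * g)" .
  have "real (card (Tset n)) * real (card (lattice_net p s)) * (2 * exp (- ((33 + ln (8 / \<delta>)) * g)))
      \<le> (2 * exp g) * exp (32 * g) * (2 * exp (- ((33 + ln (8 / \<delta>)) * g)))"
    using T N by (intro mult_mono) auto
  also have "\<dots> = 4 * exp (- (ln (8 / \<delta>) * g))"
    by (simp add: exp_add[symmetric] algebra_simps)
  also have "\<dots> \<le> 4 * (\<delta> / 8)"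
    using exp_neg_ln_mult_le[OF \<delta> gam_ge_1[OF s, of n]] unfolding g_def by simp
  finally show ?thesis unfolding g_def by simp
qed

lemma psi_test_imp_net_point:
  assumes "1 \<le> p" "1 \<le> s" "psi_test p n s \<sigma> lam x \<noteq> 0"
  shows "\<exists>t\<in>Tset n. \<exists>z\<in>lattice_net p s.
           lam * \<sigma>\<^sup>2 * rate p n s t / 2 < \<bar>proj_stat p n t (net_point s z) x\<bar>"
proof -
  obtain t where t: "t \<in> Tset n" and "lam * \<sigma>\<^sup>2 * rate p n s t < Sstat p n s t x"
    using assms(3) unfolding psi_test_def by (auto split: if_splits)
  then obtain z where "z \<in> lattice_net p s"
    "lam * \<sigma>\<^sup>2 * rate p n s t / 2 < \<bar>quadf p (\<lambda>j k. Sig1hat t x j k - Sig2hat n t x j k) (net_point s z)\<bar>"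
    using net_point_exceeds[OF assms(1,2) symm_stat_diff] unfolding Sstat_def by blast
  with t show ?thesis unfolding quadf_stat_diff_eq_proj_stat by blast
qed

lemma psi_test_eq_1I:
  assumes "t \<in> Tset n" "v \<in> sparse_sphere p s" "lam * \<sigma>\<^sup>2 * rate p n s t < \<bar>proj_stat p n t v x\<bar>"
  shows "psi_test p n s \<sigma> lam x = 1"
proof -
  have "\<bar>proj_stat p n t v x\<bar> \<le> Sstat p n s t x"
    unfolding Sstat_def quadf_stat_diff_eq_proj_stat[symmetric] by (rule abs_quadf_le_lam_smax[OF assms(2)])
  then show ?thesis using assms unfolding psi_test_def by force
qed

lemma class_P0_cov_bounded_sample:
  assumes P0: "class_P0 p n u \<sigma> P0" and "0 < u" "0 < \<sigma>"
  shows "cov_bounded_sample p n u \<sigma> P0"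
proof
  obtain \<Sigma> where \<Sigma>: "op_norm p \<Sigma> = \<sigma>\<^sup>2" "\<And>i. i \<in> {1..n} \<Longrightarrow> mat_eq p (cov P0 i) \<Sigma>"
    using P0 unfolding class_P0_def by auto
  show "op_norm p (cov P0 i) \<le> \<sigma>\<^sup>2" if "i \<in> {1..n}" for i
    using op_norm_cong[OF \<Sigma>(2)[OF that]] \<Sigma>(1) by simp
qed (use assms in \<open>auto simp: class_P0_def\<close>)

lemma class_P1_wit_cov_bounded_sample:
  assumes P: "class_P1_wit p n s u \<sigma> \<rho> t0 \<Sigma>1 \<Sigma>2 P" and "0 < u" "0 < \<sigma>"
  shows "cov_bounded_sample p n u \<sigma> P"
proof
  show "op_norm p (cov P i) \<le> \<sigma>\<^sup>2" if i: "i \<in> {1..n}" for i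
  proof (cases "i \<le> t0")
    case True
    then have "mat_eq p (cov P i) \<Sigma>1" "op_norm p \<Sigma>1 \<le> \<sigma>\<^sup>2"
      using P i unfolding class_P1_wit_def by auto
    then show ?thesis using op_norm_cong by metis
  next
    case False
    then have "mat_eq p (cov P i) \<Sigma>2" "op_norm p \<Sigma>2 \<le> \<sigma>\<^sup>2"
      using P i unfolding class_P1_wit_def by auto
    then show ?thesis using op_norm_cong by metis
  qed
qed (use assms in \<open>auto simp: class_P1_wit_def\<close>)

text \<open>If \<open>D = \<parallel>\<Sigma>1 - \<Sigma>2\<parallel> \<ge> \<sigma>\<^sup>2\<close>, the signal-to-noise ratio \<open>D / (\<sigma>\<^sup>2 - D)\<close> in the definition of
  \<open>\<rho>\<close> is not positive, hence neither is \<open>\<rho>\<close>.\<close>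

lemma class_P1_wit_op_norm_diff_less:
  assumes P: "class_P1_wit p n s u \<sigma> \<rho> t0 \<Sigma>1 \<Sigma>2 P" and "0 < \<rho>" and ps: "1 \<le> p" "1 \<le> s"
  shows "op_norm p (\<lambda>j k. \<Sigma>1 j k - \<Sigma>2 j k) < \<sigma>\<^sup>2"
proof (rule ccontr)
  define D where "D = op_norm p (\<lambda>j k. \<Sigma>1 j k - \<Sigma>2 j k)"
  have "D = lam_smax p s (\<lambda>j k. \<Sigma>1 j k - \<Sigma>2 j k)"
    and \<rho>_eq: "real (min t0 (n - t0)) * min (D / (\<sigma>\<^sup>2 - D)) ((D / (\<sigma>\<^sup>2 - D))\<^sup>2) = \<rho>"
    using P unfolding class_P1_wit_def Mset_def D_def Let_def by auto
  then have D0: "0 \<le> D" using lam_smax_nonneg[OF ps] by simp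
  assume "\<not> op_norm p (\<lambda>j k. \<Sigma>1 j k - \<Sigma>2 j k) < \<sigma>\<^sup>2"
  then have "D / (\<sigma>\<^sup>2 - D) \<le> 0" using D0 unfolding D_def[symmetric] by (simp add: divide_nonneg_nonpos)
  then have "\<rho> \<le> 0" unfolding \<rho>_eq[symmetric] by (intro mult_nonneg_nonpos) auto
  with \<open>0 < \<rho>\<close> show False by simp
qed

lemma type_I_error_le:
  assumes \<delta>: "0 < \<delta>" "\<delta> \<le> 8" and u: "0 < u" and lam: "128 * u * (33 + ln (8 / \<delta>)) \<le> lam"
    and p: "1 \<le> p" and n: "2 \<le> n" and s: "1 \<le> s" "s \<le> p" and \<sigma>: "0 < \<sigma>"
    and P0: "class_P0 p n u \<sigma> P0"
  shows "(\<integral>x. psi_test p n s \<sigma> lam x \<partial>P0) \<le> \<delta> / 2"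
proof -
  obtain \<Sigma> where \<Sigma>: "op_norm p \<Sigma> = \<sigma>\<^sup>2" "\<And>i. i \<in> {1..n} \<Longrightarrow> mat_eq p (cov P0 i) \<Sigma>"
    using P0 unfolding class_P0_def by auto
  interpret cov_bounded_sample p n u \<sigma> P0
    by (rule class_P0_cov_bounded_sample[OF P0 u \<sigma>])
  define A where "A = 33 + ln (8 / \<delta>)"
  have A: "1 \<le> A" using \<delta> unfolding A_def by simp
  define thr where "thr t = lam * \<sigma>\<^sup>2 * rate p n s t / 2" for t
  define U where "U = (\<Union>t\<in>Tset n. \<Union>z\<in>lattice_net p s. deviation_event p n P0 t (net_point s z) (thr t))"
  have U: "U \<in> events"
    unfolding U_def using finite_Tset finite_lattice_net deviation_event_in_events by blast
  have mean0: "proj_stat_mean p n P0 t w = 0" if "t \<in> Tset n" for t w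
    using Tset_memD[OF n that] \<Sigma>(2) by (subst proj_stat_mean_eq[of t \<Sigma> \<Sigma>]) auto
  have "psi_test p n s \<sigma> lam x \<le> indicator U x" if "x \<in> space P0" for x
  proof (cases "psi_test p n s \<sigma> lam x = 0")
    case False
    then obtain t z where "t \<in> Tset n" "z \<in> lattice_net p s" "thr t < \<bar>proj_stat p n t (net_point s z) x\<bar>"
      using psi_test_imp_net_point[OF p s(1)] unfolding thr_def by blast
    then have "x \<in> U" using that mean0 unfolding U_def deviation_event_def by force
    then show ?thesis unfolding psi_test_def by simp
  qed simp
  then have "(\<integral>x. psi_test p n s \<sigma> lam x \<partial>P0) \<le> prob U"
    by (rule integral_le_measure_if_le_indicator[OF U])
  also have "\<dots> \<le> (\<Sum>t\<in>Tset n. prob (\<Union>z\<in>lattice_net p s. deviation_event p n P0 t (net_point s z) (thr t)))"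
    unfolding U_def using finite_lattice_net deviation_event_in_events
    by (intro measure_UNION_le finite_Tset) auto
  also have "\<dots> \<le> (\<Sum>t\<in>Tset n. \<Sum>z\<in>lattice_net p s. prob (deviation_event p n P0 t (net_point s z) (thr t)))"
    by (intro sum_mono measure_UNION_le finite_lattice_net deviation_event_in_events)
  also have "\<dots> \<le> (\<Sum>t\<in>Tset n. \<Sum>z\<in>lattice_net p s. 2 * exp (- (A * gam p n s)))"
    using lam s unfolding thr_def
    by (intro sum_mono deviation_at_threshold_le[OF A _ s n] sqnorm_net_point_le) (auto simp: A_def)
  also have "\<dots> \<le> \<delta> / 2"
    using union_bound_le[OF \<delta> n s] unfolding A_def by (simp add: mult.assoc)
  finally show ?thesis .
qed

lemma changepoint_signal_exceeds_threshold:
  assumes u: "0 < u" and lam: "1 \<le> lam"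
    and p: "1 \<le> p" and n: "2 \<le> n" and s: "1 \<le> s" "s \<le> p" and \<sigma>: "0 < \<sigma>"
    and P: "class_P1_wit p n s u \<sigma> \<rho> t0 \<Sigma>1 \<Sigma>2 P"
    and C: "8 * lam\<^sup>2 \<le> C" and \<rho>: "C * gam p n s \<le> \<rho>"
    and signal: "C * gam p n s \<le> real (min t0 (n - t0)) * (op_norm p (\<lambda>j k. \<Sigma>1 j k - \<Sigma>2 j k))\<^sup>2 / \<sigma> ^ 4"
  shows "\<exists>t\<in>Tset n. \<exists>v\<in>sparse_sphere p s.
           3 / 2 * (lam * \<sigma>\<^sup>2 * rate p n s t) < \<bar>proj_stat_mean p n P t v\<bar>"
proof -
  interpret cov_bounded_sample p n u \<sigma> P
    by (rule class_P1_wit_cov_bounded_sample[OF P u \<sigma>])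
  define \<Delta> where "\<Delta> = (\<lambda>j k. \<Sigma>1 j k - \<Sigma>2 j k)"
  define D where "D = op_norm p \<Delta>"
  define m where "m = min t0 (n - t0)"
  have t0: "t0 \<in> {1..n-1}"
    and cov1: "\<And>i. i \<in> {1..n} \<Longrightarrow> i \<le> t0 \<Longrightarrow> mat_eq p (cov P i) \<Sigma>1"
    and cov2: "\<And>i. i \<in> {1..n} \<Longrightarrow> t0 < i \<Longrightarrow> mat_eq p (cov P i) \<Sigma>2"
    and D_eq: "D = lam_smax p s \<Delta>"
    using P unfolding class_P1_wit_def Mset_def \<Delta>_def D_def by auto
  have g: "1 \<le> gam p n s" by (rule gam_ge_1[OF s])
  have "0 < C * gam p n s"
    using C g lam by (intro mult_pos_pos) (auto intro: less_le_trans[of 0 "8 * lam\<^sup>2"])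
  then have D_lt: "D < \<sigma>\<^sup>2"
    using class_P1_wit_op_norm_diff_less[OF P _ p s(1)] \<rho> unfolding D_def \<Delta>_def by simp
  have D0: "0 \<le> D" using lam_smax_nonneg[OF p s(1)] D_eq by simp
  have m: "1 \<le> m" "2 * m \<le> n" using t0 unfolding m_def by auto
  obtain t where t: "t \<in> Tset n" "t \<le> m" "m < 2 * t" using exists_Tset_between[OF m] by blast
  have t1: "1 \<le> t" "2 * t \<le> n" using Tset_memD[OF n t(1)] by auto
  have thr: "2 * lam * \<sigma>\<^sup>2 * rate p n s t \<le> D"
    using signal_ge_twice_threshold[OF lam C g \<sigma> D0 D_lt t1(1) t(3)] signal
    unfolding m_def D_def \<Delta>_def by simp
  have "0 < rate p n s t" using rate_bounds[OF _ t1(1)] g by simp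
  then have "0 < 2 * lam * \<sigma>\<^sup>2 * rate p n s t" using lam \<sigma> by simp
  then have "0 < D" using thr by linarith
  then have "3 * D / 4 < lam_smax p s \<Delta>" using D_eq by simp
  then obtain v where v: "v \<in> sparse_sphere p s" and qv: "3 * D / 4 < \<bar>quadf p \<Delta> v\<bar>"
    unfolding lam_smax_def
    using less_cSUP_iff[OF sparse_sphere_nonempty[OF p s(1)] bdd_above_abs_quadf_sparse_sphere] by blast
  have "proj_stat_mean p n P t v = quadf p \<Sigma>1 v - quadf p \<Sigma>2 v"
    using t1 t(2) cov1 cov2 unfolding m_def by (intro proj_stat_mean_eq) auto
  also have "\<dots> = quadf p \<Delta> v" unfolding quadf_def \<Delta>_def by (simp add: sum_subtractf algebra_simps)
  finally have "proj_stat_mean p n P t v = quadf p \<Delta> v" .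
  with qv thr have "3 / 2 * (lam * \<sigma>\<^sup>2 * rate p n s t) < \<bar>proj_stat_mean p n P t v\<bar>" by simp
  with t(1) v show ?thesis by blast
qed

lemma type_II_error_le:
  assumes \<delta>: "0 < \<delta>" "\<delta> \<le> 8" and u: "0 < u"
    and lam: "128 * u * (33 + ln (8 / \<delta>)) \<le> lam" "1 \<le> lam"
    and p: "1 \<le> p" and n: "2 \<le> n" and s: "1 \<le> s" "s \<le> p" and \<sigma>: "0 < \<sigma>"
    and P: "class_P1_wit p n s u \<sigma> \<rho> t0 \<Sigma>1 \<Sigma>2 P"
    and C: "8 * lam\<^sup>2 \<le> C" and \<rho>: "C * gam p n s \<le> \<rho>"
    and signal: "C * gam p n s \<le> real (min t0 (n - t0)) * (op_norm p (\<lambda>j k. \<Sigma>1 j k - \<Sigma>2 j k))\<^sup>2 / \<sigma> ^ 4"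
  shows "(\<integral>x. 1 - psi_test p n s \<sigma> lam x \<partial>P) \<le> \<delta> / 2"
proof -
  interpret cov_bounded_sample p n u \<sigma> P
    by (rule class_P1_wit_cov_bounded_sample[OF P u \<sigma>])
  obtain t v where t: "t \<in> Tset n" and v: "v \<in> sparse_sphere p s"
    and mean: "3 / 2 * (lam * \<sigma>\<^sup>2 * rate p n s t) < \<bar>proj_stat_mean p n P t v\<bar>"
    using changepoint_signal_exceeds_threshold[OF u lam(2) p n s \<sigma> P C \<rho> signal] by blast
  define E where "E = deviation_event p n P t v (lam * \<sigma>\<^sup>2 * rate p n s t / 2)"
  have "1 - psi_test p n s \<sigma> lam x \<le> indicator E x" if "x \<in> space P" for x
  proof (cases "x \<in> E")
    case False
    then have "\<bar>proj_stat p n t v x - proj_stat_mean p n P t v\<bar> < lam * \<sigma>\<^sup>2 * rate p n s t / 2"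
      using that unfolding E_def deviation_event_def by auto
    then have "lam * \<sigma>\<^sup>2 * rate p n s t < \<bar>proj_stat p n t v x\<bar>" using mean by linarith
    then show ?thesis using psi_test_eq_1I[OF t v] by simp
  qed (simp add: psi_test_def)
  then have "(\<integral>x. 1 - psi_test p n s \<sigma> lam x \<partial>P) \<le> prob E"
    unfolding E_def by (rule integral_le_measure_if_le_indicator[OF deviation_event_in_events])
  also have "\<dots> \<le> 2 * exp (- ((33 + ln (8 / \<delta>)) * gam p n s))"
    unfolding E_def using v lam(1) \<delta>
    by (intro deviation_at_threshold_le[OF _ _ s n t]) (auto simp: sparse_sphere_def sphere_p_iff)
  also have "\<dots> \<le> 2 * exp (- (ln (8 / \<delta>) * gam p n s))"
    using gam_ge_1[OF s, of n] by (simp add: algebra_simps)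
  also have "\<dots> \<le> 2 * (\<delta> / 8)" using exp_neg_ln_mult_le[OF \<delta> gam_ge_1[OF s, of n]] by simp
  finally show ?thesis using \<delta> by linarith
qed

theorem proposition4:
  fixes \<delta> u :: real
  assumes "0 < \<delta>" "\<delta> < 1" "0 < u"
  shows "\<exists>lam0 > 0. \<forall>lam \<ge> lam0. \<forall>(p::nat) (n::nat) (s::nat) (\<sigma>::real) (\<rho>::real) (C::real)
           (P0::data measure) (P::data measure) (t0::nat) \<Sigma>1 \<Sigma>2.
      1 \<le> p \<longrightarrow> 2 \<le> n \<longrightarrow> 1 \<le> s \<longrightarrow> s \<le> p \<longrightarrow> 0 < \<sigma> \<longrightarrow>
      class_P0 p n u \<sigma> P0 \<longrightarrow>
      class_P1_wit p n s u \<sigma> \<rho> t0 \<Sigma>1 \<Sigma>2 P \<longrightarrow>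
      C \<ge> 8 * lam\<^sup>2 \<longrightarrow>
      \<rho> \<ge> C * gam p n s \<longrightarrow>
      real (min t0 (n - t0)) * (op_norm p (\<lambda>j k. \<Sigma>1 j k - \<Sigma>2 j k))\<^sup>2 / \<sigma> ^ 4
         \<ge> C * gam p n s \<longrightarrow>
      (\<integral>x. psi_test p n s \<sigma> lam x \<partial>P0) + (\<integral>x. 1 - psi_test p n s \<sigma> lam x \<partial>P) \<le> \<delta>"
proof (intro exI[of _ "max 1 (128 * u * (33 + ln (8 / \<delta>)))"] conjI allI impI)
  show "0 < max 1 (128 * u * (33 + ln (8 / \<delta>)))" by simp
  fix lam \<sigma> \<rho> C :: real and p n s t0 :: nat and P0 P :: "data measure" and \<Sigma>1 \<Sigma>2
  assume "max 1 (128 * u * (33 + ln (8 / \<delta>))) \<le> lam" and ps: "1 \<le> p" "2 \<le> n" "1 \<le> s" "s \<le> p"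
    and \<sigma>: "0 < \<sigma>" and P0: "class_P0 p n u \<sigma> P0" and P: "class_P1_wit p n s u \<sigma> \<rho> t0 \<Sigma>1 \<Sigma>2 P"
    and C: "8 * lam\<^sup>2 \<le> C" and \<rho>: "C * gam p n s \<le> \<rho>"
    and signal: "C * gam p n s \<le> real (min t0 (n - t0)) * (op_norm p (\<lambda>j k. \<Sigma>1 j k - \<Sigma>2 j k))\<^sup>2 / \<sigma> ^ 4"
  then have lam: "128 * u * (33 + ln (8 / \<delta>)) \<le> lam" "1 \<le> lam" by auto
  have \<delta>: "0 < \<delta>" "\<delta> \<le> 8" using assms by auto
  show "(\<integral>x. psi_test p n s \<sigma> lam x \<partial>P0) + (\<integral>x. 1 - psi_test p n s \<sigma> lam x \<partial>P) \<le> \<delta>"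
    using type_I_error_le[OF \<delta> assms(3) lam(1) ps \<sigma> P0]
      type_II_error_le[OF \<delta> assms(3) lam ps \<sigma> P C \<rho> signal] by simp
qed

end
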